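(* Let $T>0$, $L>0$, $\alpha\in\mathbb{R}\setminus\{0\}$ and let $n\ge 2$ be an integer. Let $x_0>L$, $0<t_0<T$, $\beta>0$, and set $\psi(t,x)=(x-x_0)^2-\beta(t-t_0)^2$. Then there exist a constant $C>0$ and, for each $m\in\{0,\dots,n-1\}$, functions $R_m(t,x;\lambda)$ satisfying $|R_m(t,x;\lambda)|\le C\lambda^{2n-2m-3}$ for all $(t,x)\in[0,T]\times[0,L]$ and all $\lambda\ge 1$, such that for every $\lambda\ge1$ and every $v\in C_0^\infty((0,T)\times(0,L);\mathbb{R})$, with $w=e^{\lambda\psi}v$, $$\sum_{m=0}^{n-1}\int_0^T\!\!\int_0^L\Big[n^2\binom{n-1}{m}\lambda^{2n-2m-1}\psi_x^{2n-2m-2}\psi_{xx}+R_m(t,x;\lambda)\Big]|\partial_x^m w|^2\,dx\,dt\le \int_0^T\!\!\int_0^L e^{2\lambda\psi}\big|\alpha\partial_t v+\partial_x^n v\big|^2\,dx\,dt.$$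
   Context: $\binom{j}{k}$ denotes the binomial coefficient (taken to be $0$ unless $0\le k\le j$). $\psi_x,\psi_{xx}$ denote partial derivatives of $\psi$ in $x$; here $\psi_x=2(x-x_0)$, $\psi_{xx}=2$. *)

theory Defs
  imports "HOL-Analysis.Analysis"
begin

definition pt :: "(real \<Rightarrow> real \<Rightarrow> real) \<Rightarrow> real \<Rightarrow> real \<Rightarrow> real" where
  "pt f = (\<lambda>t x. deriv (\<lambda>s. f s x) t)"

definition px :: "(real \<Rightarrow> real \<Rightarrow> real) \<Rightarrow> real \<Rightarrow> real \<Rightarrow> real" where
  "px f = (\<lambda>t x. deriv (\<lambda>y. f t y) x)"

definition apply_partials :: "bool list \<Rightarrow> (real \<Rightarrow> real \<Rightarrow> real) \<Rightarrow> real \<Rightarrow> real \<Rightarrow> real" where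
  "apply_partials ds f = fold (\<lambda>b g. if b then pt g else px g) ds f"

text \<open>C-infinity on R^2: every iterated partial derivative is (Frechet) differentiable everywhere.\<close>
definition smooth2 :: "(real \<Rightarrow> real \<Rightarrow> real) \<Rightarrow> bool" where
  "smooth2 f \<longleftrightarrow> (\<forall>ds z. (\<lambda>p. apply_partials ds f (fst p) (snd p)) differentiable (at z))"

text \<open>C_0^infinity((0,T) x (0,L)), functions extended by zero to all of R^2.\<close>
definition test_fun :: "real \<Rightarrow> real \<Rightarrow> (real \<Rightarrow> real \<Rightarrow> real) \<Rightarrow> bool" where
  "test_fun T L v \<longleftrightarrow> smooth2 v \<and>
     (\<exists>a b c d. 0 < a \<and> b < T \<and> 0 < c \<and> d < L \<and>
        (\<forall>t x. v t x \<noteq> 0 \<longrightarrow> a \<le> t \<and> t \<le> b \<and> c \<le> x \<and> x \<le> d))"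

end

theory Submission
  imports Defs "HOL-Computational_Algebra.Polynomial"
begin

text \<open>
  Write \<open>w = e\<^sup>\<lambda>\<^sup>\<psi> v\<close> and let \<open>B = \<partial>\<^sub>x - \<lambda>\<psi>\<^sub>x\<close> be the conjugated derivative, with formal
  adjoint \<open>B\<^sup>* = -\<partial>\<^sub>x - \<lambda>\<psi>\<^sub>x\<close>; then \<open>e\<^sup>\<lambda>\<^sup>\<psi>(\<alpha>\<partial>\<^sub>tv + \<partial>\<^sub>x\<^sup>nv) = \<alpha>\<partial>\<^sub>tw - \<alpha>\<lambda>\<psi>\<^sub>tw + B\<^sup>nw\<close>.
  On each time slice the square of this is at least \<open>|B\<^sup>nw|\<^sup>2 - |B\<^sup>*\<^sup>nw|\<^sup>2 - 4\<alpha>\<^sup>2\<beta>\<lambda>|w|\<^sup>2\<close> minus the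
  time derivative of a flux, which integrates to zero because \<open>v\<close> vanishes near \<open>t = 0\<close> and
  \<open>t = T\<close>. The commutator \<open>B\<^sup>*B - BB\<^sup>* = 4\<lambda>\<close> gives
  \<open>|B\<^sup>nw|\<^sup>2 - |B\<^sup>*\<^sup>nw|\<^sup>2 \<ge> 4n\<^sup>2\<lambda>|B\<^sup>*\<^sup>n\<^sup>-\<^sup>1w|\<^sup>2\<close>, and expanding \<open>|B\<^sup>*\<^sup>kw|\<^sup>2\<close> by induction on
  \<open>k\<close> yields \<open>\<Sum>\<^sub>m C(k,m) \<lambda>\<^bsup>2(k-m)\<^esup> \<integral>\<psi>\<^sub>x\<^bsup>2(k-m)\<^esup>|\<partial>\<^sub>x\<^sup>mw|\<^sup>2\<close> up to lower order terms. As
  \<open>|\<psi>\<^sub>x| \<ge> 2(x\<^sub>0 - L) > 0\<close> on \<open>[0, L]\<close>, half of this leading part absorbs all lower order terms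
  once \<open>\<lambda>\<close> is large, which gives the estimate with \<open>R = 0\<close>.
\<close>

section \<open>Smooth functions of one variable\<close>

definition real_smooth :: "(real \<Rightarrow> real) \<Rightarrow> bool" where
  "real_smooth g \<longleftrightarrow> (\<forall>k x. (deriv ^^ k) g field_differentiable (at x))"

lemma real_smooth_differentiable: "real_smooth g \<Longrightarrow> (deriv ^^ k) g field_differentiable (at x)"
  by (simp add: real_smooth_def)

lemma higher_deriv_Suc': "(deriv ^^ Suc k) g = (deriv ^^ k) (deriv g)"
  by (simp add: funpow_Suc_right del: funpow.simps)

lemma real_smooth_deriv: "real_smooth g \<Longrightarrow> real_smooth (deriv g)"
  unfolding real_smooth_def by (metis higher_deriv_Suc')

lemma real_smooth_higher_deriv: "real_smooth g \<Longrightarrow> real_smooth ((deriv ^^ k) g)"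
  by (induction k) (auto intro: real_smooth_deriv)

lemma continuous_on_higher_deriv [continuous_intros]:
  "real_smooth g \<Longrightarrow> continuous_on S (\<lambda>x. (deriv ^^ k) g x)"
  by (meson real_smooth_differentiable continuous_at_imp_continuous_on
      field_differentiable_imp_continuous_at)

lemma continuous_on_deriv [continuous_intros]: "real_smooth g \<Longrightarrow> continuous_on S (\<lambda>x. deriv g x)"
  using continuous_on_higher_deriv[of g S 1] by simp

lemma real_smooth_continuous_on: "real_smooth g \<Longrightarrow> continuous_on S g"
  using continuous_on_higher_deriv[of g S 0] by simp

lemma real_smooth_has_higher_deriv: "real_smooth g
    \<Longrightarrow> ((deriv ^^ k) g has_field_derivative (deriv ^^ Suc k) g x) (at x)"
  using real_smooth_differentiable[of g k x] DERIV_deriv_iff_field_differentiable by fastforce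

lemma real_smooth_has_deriv: "real_smooth g \<Longrightarrow> (g has_field_derivative deriv g x) (at x)"
  using real_smooth_has_higher_deriv[of g 0 x] by simp

lemma real_smooth_has_second_deriv: "real_smooth g
    \<Longrightarrow> (deriv g has_field_derivative deriv (deriv g) x) (at x)"
  using real_smooth_has_higher_deriv[of g 1 x] by simp

lemma deriv_linear_combination:
  assumes "f field_differentiable (at x)" "g field_differentiable (at x)"
  shows "deriv (\<lambda>y. a * f y + b * g y) x = a * deriv f x + b * deriv g x"
  by (rule DERIV_imp_deriv) (auto intro!: derivative_eq_intros field_differentiable_derivI assms)

lemma field_differentiable_linear_combination:
  assumes "f field_differentiable (at x)" "g field_differentiable (at x)"
  shows "(\<lambda>y. a * f y + b * g y) field_differentiable (at x)"
  unfolding field_differentiable_def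
  by (rule exI) (auto intro!: derivative_eq_intros field_differentiable_derivI assms)

lemma higher_deriv_linear_combination:
  assumes "real_smooth f" "real_smooth g"
  shows "(deriv ^^ k) (\<lambda>y. a * f y + b * g y) = (\<lambda>y. a * (deriv ^^ k) f y + b * (deriv ^^ k) g y)"
proof (induction k)
  case 0 then show ?case by simp
next
  case (Suc k)
  have "(deriv ^^ Suc k) (\<lambda>y. a * f y + b * g y)
      = deriv (\<lambda>y. a * (deriv ^^ k) f y + b * (deriv ^^ k) g y)"
    using Suc by simp
  then show ?case by (simp add: fun_eq_iff deriv_linear_combination real_smooth_differentiable assms)
qed

lemma real_smooth_linear_combination: "real_smooth f \<Longrightarrow> real_smooth g
    \<Longrightarrow> real_smooth (\<lambda>y. a * f y + b * g y)"
  unfolding real_smooth_def[of "\<lambda>y. a * f y + b * g y"]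
  by (simp add: higher_deriv_linear_combination field_differentiable_linear_combination
      real_smooth_differentiable)

lemma higher_deriv_affine_mult:
  assumes "real_smooth f"
  shows "(deriv ^^ k) (\<lambda>y. (a * y + b) * f y) =
     (\<lambda>y. (a * y + b) * (deriv ^^ k) f y + real k * a * (deriv ^^ (k - 1)) f y)"
proof (induction k)
  case 0 then show ?case by simp
next
  case (Suc k)
  have e: "k \<noteq> 0 \<Longrightarrow> deriv ((deriv ^^ (k - 1)) f) y = (deriv ^^ k) f y" for y
    by (cases k) auto
  have "(deriv ^^ Suc k) (\<lambda>y. (a * y + b) * f y) =
        deriv (\<lambda>y. (a * y + b) * (deriv ^^ k) f y + real k * a * (deriv ^^ (k - 1)) f y)"
    by (simp add: Suc)
  also have "\<dots> = (\<lambda>y. (a * y + b) * (deriv ^^ Suc k) f y + real (Suc k) * a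
      * (deriv ^^ (Suc k - 1)) f y)"
  proof
    fix y
    have D: "((\<lambda>y. (a * y + b) * (deriv ^^ k) f y + real k * a * (deriv ^^ (k - 1)) f y)
        has_field_derivative
        (a * (deriv ^^ k) f y + (a * y + b) * (deriv ^^ Suc k) f y + real k * a
            * deriv ((deriv ^^ (k - 1)) f) y)) (at y)"
      by (auto intro!: derivative_eq_intros real_smooth_has_higher_deriv[OF assms]
          field_differentiable_derivI real_smooth_differentiable[OF assms])
    have "deriv (\<lambda>y. (a * y + b) * (deriv ^^ k) f y + real k * a * (deriv ^^ (k - 1)) f y) y =
      a * (deriv ^^ k) f y + (a * y + b) * (deriv ^^ Suc k) f y + real k * a
          * deriv ((deriv ^^ (k - 1)) f) y"
      by (rule DERIV_imp_deriv[OF D])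
    also have "\<dots> = (a * y + b) * (deriv ^^ Suc k) f y + real (Suc k) * a * (deriv ^^ (Suc k - 1)) f y"
      using e[of y] by (cases "k = 0") (auto simp: algebra_simps)
    finally show "deriv (\<lambda>y. (a * y + b) * (deriv ^^ k) f y + real k * a * (deriv ^^ (k - 1)) f y) y =
       (a * y + b) * (deriv ^^ Suc k) f y + real (Suc k) * a * (deriv ^^ (Suc k - 1)) f y" .
  qed
  finally show ?case .
qed

lemma real_smooth_affine_mult: assumes "real_smooth f" shows "real_smooth (\<lambda>y. (a * y + b) * f y)"
  unfolding real_smooth_def higher_deriv_affine_mult[OF assms]
proof (intro allI)
  fix k x
  have "((\<lambda>y. (a * y + b) * (deriv ^^ k) f y) has_field_derivative
      (a * (deriv ^^ k) f x + (a * x + b) * (deriv ^^ Suc k) f x)) (at x)"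
    by (auto intro!: derivative_eq_intros real_smooth_has_higher_deriv[OF assms])
  then have "(\<lambda>y. (a * y + b) * (deriv ^^ k) f y) field_differentiable at x"
    unfolding field_differentiable_def by blast
  from field_differentiable_linear_combination[OF this
      real_smooth_differentiable[OF assms, of "k - 1" x], of 1 "real k * a"]
  show "(\<lambda>y. (a * y + b) * (deriv ^^ k) f y + real k * a * (deriv ^^ (k - 1)) f y)
      field_differentiable at x"
    by simp
qed

lemma real_smooth_exp_poly: "real_smooth (\<lambda>x. exp (poly q x))"
proof -
  have ex: "\<exists>r. (deriv ^^ k) (\<lambda>x. exp (poly q x)) = (\<lambda>x. poly r x * exp (poly q x))" for k
  proof (induction k)
    case 0 show ?case by (rule exI[of _ 1]) simp
  next
    case (Suc k)
    then obtain r where r: "(deriv ^^ k) (\<lambda>x. exp (poly q x)) = (\<lambda>x. poly r x * exp (poly q x))" by blast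
    have "deriv (\<lambda>x. poly r x * exp (poly q x))
        = (\<lambda>x. poly (pderiv r + r * pderiv q) x * exp (poly q x))"
    proof
      fix x
      show "deriv (\<lambda>x. poly r x * exp (poly q x)) x = poly (pderiv r + r * pderiv q) x * exp (poly q x)"
        by (rule DERIV_imp_deriv) (auto intro!: derivative_eq_intros poly_DERIV simp: algebra_simps)
    qed
    then show ?case using r by (intro exI[of _ "pderiv r + r * pderiv q"]) simp
  qed
  show ?thesis unfolding real_smooth_def
  proof (intro allI)
    fix k x
    obtain r where r: "(deriv ^^ k) (\<lambda>x. exp (poly q x)) = (\<lambda>x. poly r x * exp (poly q x))" using ex
        by blast
    have "((\<lambda>x. poly r x * exp (poly q x)) has_field_derivative
       (poly (pderiv r) x * exp (poly q x) + poly r x * (exp (poly q x) * poly (pderiv q) x))) (at x)"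
      by (auto intro!: derivative_eq_intros poly_DERIV)
    then show "(deriv ^^ k) (\<lambda>x. exp (poly q x)) field_differentiable at x"
      unfolding r field_differentiable_def by blast
  qed
qed

lemma real_smooth_exp_quadratic: "real_smooth (\<lambda>x. exp (c * (x - a)^2))"
proof -
  have "(\<lambda>x. exp (c * (x - a)^2)) = (\<lambda>x. exp (poly [:c*a^2, -2*c*a, c:] x))"
    by (simp add: fun_eq_iff power2_eq_square algebra_simps)
  then show ?thesis using real_smooth_exp_poly[of "[:c*a^2, -2*c*a, c:]"] by (simp only:)
qed

definition vanishes_outside :: "real \<Rightarrow> real \<Rightarrow> (real \<Rightarrow> real) \<Rightarrow> bool" where
  "vanishes_outside c d g \<longleftrightarrow> (\<forall>x. x < c \<or> d < x \<longrightarrow> g x = 0)"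

lemma vanishes_outside_deriv: assumes "vanishes_outside c d g" shows "vanishes_outside c d (deriv g)"
  unfolding vanishes_outside_def
proof (intro allI impI)
  fix x assume x: "x < c \<or> d < x"
  have z: "((\<lambda>_. 0::real) has_field_derivative 0) (at x)" by simp
  have "(g has_field_derivative 0) (at x)"
  proof (cases "x < c")
    case True
    have "\<And>y. y \<in> {..<c} \<Longrightarrow> 0 = g y" using assms by (simp add: vanishes_outside_def)
    show ?thesis
      by (rule has_field_derivative_transform_within_open[of "\<lambda>_. 0" 0 x "{..<c}" g, OF z])
        (use True \<open>\<And>y. y \<in> {..<c} \<Longrightarrow> 0 = g y\<close> in auto)
  next
    case False
    then have "d < x" using x by auto
    have "\<And>y. y \<in> {d<..} \<Longrightarrow> 0 = g y" using assms by (simp add: vanishes_outside_def)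
    show ?thesis
      by (rule has_field_derivative_transform_within_open[of "\<lambda>_. 0" 0 x "{d<..}" g, OF z])
        (use \<open>d < x\<close> \<open>\<And>y. y \<in> {d<..} \<Longrightarrow> 0 = g y\<close> in auto)
  qed
  then show "deriv g x = 0" by (rule DERIV_imp_deriv)
qed

lemma vanishes_outside_higher_deriv: "vanishes_outside c d g \<Longrightarrow> vanishes_outside c d ((deriv ^^ k) g)"
proof (induction k)
  case (Suc k) then show ?case using vanishes_outside_deriv[of c d "(deriv ^^ k) g"] by simp
qed simp

lemma vanishes_outside_linear_combination: "vanishes_outside c d f \<Longrightarrow> vanishes_outside c d g
    \<Longrightarrow> vanishes_outside c d (\<lambda>y. a * f y + b * g y)"
  by (simp add: vanishes_outside_def)

lemma vanishes_outside_mult: "vanishes_outside c d f \<Longrightarrow> vanishes_outside c d (\<lambda>y. h y * f y)"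
  by (simp add: vanishes_outside_def)

definition supported_smooth :: "real \<Rightarrow> real \<Rightarrow> (real \<Rightarrow> real) \<Rightarrow> bool" where
  "supported_smooth c d g \<longleftrightarrow> real_smooth g \<and> vanishes_outside c d g"

section \<open>The conjugated derivative and its adjoint\<close>

text \<open>\<open>conj_deriv lam x0 f = e\<^sup>\<lambda>\<^sup>\<phi> (e\<^sup>-\<^sup>\<lambda>\<^sup>\<phi> f)'\<close> for \<open>\<phi>(x) = (x - x0)\<^sup>2\<close>, the space part of the
  Carleman weight; \<open>conj_deriv_adj\<close> is its formal \<open>L\<^sup>2\<close>-adjoint.\<close>

definition conj_deriv :: "real \<Rightarrow> real \<Rightarrow> (real \<Rightarrow> real) \<Rightarrow> real \<Rightarrow> real" where
  "conj_deriv lam x0 f = (\<lambda>x. deriv f x - lam * (2 * (x - x0)) * f x)"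

definition conj_deriv_adj :: "real \<Rightarrow> real \<Rightarrow> (real \<Rightarrow> real) \<Rightarrow> real \<Rightarrow> real" where
  "conj_deriv_adj lam x0 f = (\<lambda>x. - deriv f x - lam * (2 * (x - x0)) * f x)"

lemma conj_deriv_affine: "conj_deriv lam x0 f
    = (\<lambda>y. 1 * deriv f y + (-1) * (((2*lam) * y + (-2*lam*x0)) * f y))"
  by (auto simp: conj_deriv_def algebra_simps)

lemma conj_deriv_adj_affine: "conj_deriv_adj lam x0 f
    = (\<lambda>y. (-1) * deriv f y + (-1) * (((2*lam) * y + (-2*lam*x0)) * f y))"
  by (auto simp: conj_deriv_adj_def algebra_simps)

lemma real_smooth_conj_deriv: "real_smooth f \<Longrightarrow> real_smooth (conj_deriv lam x0 f)"
  unfolding conj_deriv_affine by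
      (intro real_smooth_linear_combination real_smooth_deriv real_smooth_affine_mult)

lemma real_smooth_conj_deriv_adj: "real_smooth f \<Longrightarrow> real_smooth (conj_deriv_adj lam x0 f)"
  unfolding conj_deriv_adj_affine
  by (intro real_smooth_linear_combination real_smooth_deriv real_smooth_affine_mult)

lemma vanishes_outside_conj_deriv: "vanishes_outside c d f \<Longrightarrow> vanishes_outside c d (conj_deriv lam x0 f)"
  unfolding conj_deriv_affine by
      (intro vanishes_outside_linear_combination vanishes_outside_deriv vanishes_outside_mult)

lemma vanishes_outside_conj_deriv_adj: "vanishes_outside c d f
    \<Longrightarrow> vanishes_outside c d (conj_deriv_adj lam x0 f)"
  unfolding conj_deriv_adj_affine
  by (intro vanishes_outside_linear_combination vanishes_outside_deriv vanishes_outside_mult)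

lemma supported_smooth_conj_deriv: "supported_smooth c d f \<Longrightarrow> supported_smooth c d (conj_deriv lam x0 f)"
  by (simp add: supported_smooth_def real_smooth_conj_deriv vanishes_outside_conj_deriv)

lemma supported_smooth_conj_deriv_adj: "supported_smooth c d f
    \<Longrightarrow> supported_smooth c d (conj_deriv_adj lam x0 f)"
  by (simp add: supported_smooth_def real_smooth_conj_deriv_adj vanishes_outside_conj_deriv_adj)

lemma supported_smooth_conj_deriv_adj_pow: "supported_smooth c d f
    \<Longrightarrow> supported_smooth c d ((conj_deriv_adj lam x0 ^^ k) f)"
  by (induction k) (auto intro: supported_smooth_conj_deriv_adj)

lemma conj_deriv_exp_weight:
  assumes "real_smooth u"
  shows "conj_deriv lam x0 (\<lambda>x. exp (lam * ((x - x0)^2 - kk)) * u x)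
      = (\<lambda>x. exp (lam * ((x - x0)^2 - kk)) * deriv u x)"
proof
  fix x
  have "((\<lambda>x. exp (lam * ((x - x0)^2 - kk)) * u x) has_field_derivative
      (exp (lam * ((x - x0)^2 - kk)) * (lam * (2 * (x - x0))) * u x + exp (lam * ((x - x0)^2 - kk))
          * deriv u x)) (at x)"
    by (auto intro!: derivative_eq_intros real_smooth_has_deriv assms simp: algebra_simps)
  then show "conj_deriv lam x0 (\<lambda>x. exp (lam * ((x - x0)^2 - kk)) * u x) x
      = exp (lam * ((x - x0)^2 - kk)) * deriv u x"
    unfolding conj_deriv_def by (simp add: DERIV_imp_deriv algebra_simps)
qed

lemma conj_deriv_pow_exp_weight:
  assumes "real_smooth u"
  shows "(conj_deriv lam x0 ^^ k) (\<lambda>x. exp (lam * ((x - x0)^2 - kk)) * u x)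
      = (\<lambda>x. exp (lam * ((x - x0)^2 - kk)) * (deriv ^^ k) u x)"
proof (induction k)
  case 0 then show ?case by simp
next
  case (Suc k)
  show ?case using conj_deriv_exp_weight[OF real_smooth_higher_deriv[OF assms, of k], of lam x0 kk]
      Suc by simp
qed

lemma continuous_on_has_integral:
  "continuous_on {a..b} (f :: real \<Rightarrow> real) \<Longrightarrow> (f has_integral integral {a..b} f) {a..b}"
  using integrable_continuous_interval has_integral_integral by blast

definition l2_inner :: "real \<Rightarrow> (real \<Rightarrow> real) \<Rightarrow> (real \<Rightarrow> real) \<Rightarrow> real" where
  "l2_inner L f g = integral {0..L} (\<lambda>x. f x * g x)"

definition l2_norm_sq :: "real \<Rightarrow> (real \<Rightarrow> real) \<Rightarrow> real" where
  "l2_norm_sq L f = l2_inner L f f"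

lemma l2_inner_commute: "l2_inner L f g = l2_inner L g f"
  by (simp add: l2_inner_def mult.commute)

lemma integral_linear_combination:
  fixes f g :: "real \<Rightarrow> real"
  assumes "continuous_on {0..L} f" "continuous_on {0..L} g"
  shows "integral {0..L} (\<lambda>x. a * f x + b * g x) = a * integral {0..L} f + b * integral {0..L} g"
proof -
  have i1: "f integrable_on {0..L}" by (rule integrable_continuous_interval[OF assms(1)])
  have i2: "g integrable_on {0..L}" by (rule integrable_continuous_interval[OF assms(2)])
  have "((\<lambda>x. a * f x + b * g x) has_integral (a * integral {0..L} f + b * integral {0..L} g)) {0..L}"
    by (intro has_integral_add has_integral_mult_right)
        (use i1 i2 in \<open>simp_all add: has_integral_integral\<close>)
  then show ?thesis by (rule integral_unique)
qed

lemma l2_inner_add_right: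
  assumes "continuous_on {0..L} f" "continuous_on {0..L} g" "continuous_on {0..L} h"
  shows "l2_inner L h (\<lambda>x. f x + a * g x) = l2_inner L h f + a * l2_inner L h g"
proof -
  have "l2_inner L h (\<lambda>x. f x + a * g x) = integral {0..L} (\<lambda>x. 1 * (h x * f x) + a * (h x * g x))"
    unfolding l2_inner_def by (simp add: algebra_simps)
  also have "\<dots> = l2_inner L h f + a * l2_inner L h g"
    unfolding l2_inner_def by (subst integral_linear_combination) (auto intro!: continuous_intros assms)
  finally show ?thesis .
qed

lemma has_integral_l2_inner:
  assumes "continuous_on {0..L} f" "continuous_on {0..L} g"
  shows "((\<lambda>x. f x * g x) has_integral l2_inner L f g) {0..L}"
  unfolding l2_inner_def by (rule continuous_on_has_integral) (intro continuous_intros assms)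

lemma l2_norm_sq_nonneg: "continuous_on {0..L} f \<Longrightarrow> 0 \<le> l2_norm_sq L f"
  unfolding l2_norm_sq_def l2_inner_def
  by (rule integral_nonneg) (auto intro!: integrable_continuous_interval continuous_intros)

lemma l2_norm_sq_add:
  assumes "continuous_on {0..L} f" "continuous_on {0..L} g"
  shows "l2_norm_sq L (\<lambda>x. f x + a * g x) = l2_norm_sq L f + 2 * a * l2_inner L f g + a^2
      * l2_norm_sq L g"
proof -
  have c: "continuous_on {0..L} (\<lambda>x. f x + a * g x)" by (auto intro!: continuous_intros assms)
  have "l2_norm_sq L (\<lambda>x. f x + a * g x) = l2_inner L (\<lambda>x. f x + a * g x) f + a
      * l2_inner L (\<lambda>x. f x + a * g x) g"
    unfolding l2_norm_sq_def by (rule l2_inner_add_right[OF assms c])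
  also have "l2_inner L (\<lambda>x. f x + a * g x) f = l2_inner L f f + a * l2_inner L f g"
    by (subst l2_inner_commute) (rule l2_inner_add_right[OF assms assms(1)])
  also have "l2_inner L (\<lambda>x. f x + a * g x) g = l2_inner L g f + a * l2_inner L g g"
    by (subst l2_inner_commute) (rule l2_inner_add_right[OF assms assms(2)])
  finally show ?thesis by (simp add: l2_norm_sq_def l2_inner_commute[of L g f] power2_eq_square
      algebra_simps)
qed

lemma integration_by_parts_supported:
  assumes "0 \<le> L" "0 < c" "d < L" "real_smooth f" "real_smooth g" "vanishes_outside c d f"
  shows "integral {0..L} (\<lambda>x. deriv f x * g x) = - integral {0..L} (\<lambda>x. f x * deriv g x)"
proof -
  have f0: "f 0 = 0" "f L = 0" using assms(2,3,6) by (auto simp: vanishes_outside_def)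
  have "((\<lambda>x. deriv f x * g x + f x * deriv g x) has_integral (f L * g L - f 0 * g 0)) {0..L}"
  proof (rule fundamental_theorem_of_calculus[OF assms(1)])
    fix x assume "x \<in> {0..L}"
    have "((\<lambda>x. f x * g x) has_field_derivative (deriv f x * g x + f x * deriv g x)) (at x)"
      by (auto intro!: derivative_eq_intros real_smooth_has_deriv assms)
    then show "((\<lambda>x. f x * g x) has_vector_derivative (deriv f x * g x + f x * deriv g x))
        (at x within {0..L})"
      by (simp add: has_real_derivative_iff_has_vector_derivative[symmetric]
          has_field_derivative_at_within)
  qed
  then have "integral {0..L} (\<lambda>x. 1 * (deriv f x * g x) + 1 * (f x * deriv g x)) = 0"
    using f0 by (simp add: integral_unique)
  then show ?thesis
    by (subst (asm) integral_linear_combination)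
        (auto intro!: continuous_intros assms real_smooth_continuous_on[OF assms(4)]
            real_smooth_continuous_on[OF assms(5)])
qed

lemma conj_deriv_adjoint:
  assumes "0 \<le> L" "0 < c" "d < L" "supported_smooth c d f" "supported_smooth c d g"
  shows "l2_inner L (conj_deriv lam x0 f) g = l2_inner L f (conj_deriv_adj lam x0 g)"
proof -
  have C: "real_smooth f" "real_smooth g" "vanishes_outside c d f" using assms
      by (auto simp: supported_smooth_def)
  have "l2_inner L (conj_deriv lam x0 f) g
      = integral {0..L} (\<lambda>x. 1 * (deriv f x * g x) + (- lam) * (2 * (x - x0) * f x * g x))"
    unfolding l2_inner_def conj_deriv_def by (simp add: algebra_simps)
  also have "\<dots> = integral {0..L} (\<lambda>x. deriv f x * g x) - lam
      * integral {0..L} (\<lambda>x. 2 * (x - x0) * f x * g x)"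
    by (subst integral_linear_combination)
        (auto intro!: continuous_intros C real_smooth_continuous_on[OF C(1)]
            real_smooth_continuous_on[OF C(2)])
  also have "\<dots> = - integral {0..L} (\<lambda>x. f x * deriv g x) - lam
      * integral {0..L} (\<lambda>x. 2 * (x - x0) * f x * g x)"
    using integration_by_parts_supported[OF assms(1-3) C] by simp
  also have "\<dots> = integral {0..L} (\<lambda>x. (-1) * (f x * deriv g x) + (- lam) * (2 * (x - x0) * f x * g x))"
    by (subst integral_linear_combination)
        (auto intro!: continuous_intros C real_smooth_continuous_on[OF C(1)]
            real_smooth_continuous_on[OF C(2)])
  also have "\<dots> = l2_inner L f (conj_deriv_adj lam x0 g)"
    unfolding l2_inner_def conj_deriv_adj_def by (simp add: algebra_simps)
  finally show ?thesis .
qed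

lemma conj_deriv_pow_adjoint:
  assumes "0 \<le> L" "0 < c" "d < L" "supported_smooth c d f" "supported_smooth c d g"
  shows "l2_inner L ((conj_deriv lam x0 ^^ k) f) g = l2_inner L f ((conj_deriv_adj lam x0 ^^ k) g)"
  using assms(4,5)
proof (induction k arbitrary: f)
  case 0 then show ?case by simp
next
  case (Suc k)
  have "l2_inner L ((conj_deriv lam x0 ^^ Suc k) f) g
      = l2_inner L ((conj_deriv lam x0 ^^ k) (conj_deriv lam x0 f)) g"
    by (simp add: funpow_Suc_right del: funpow.simps)
  also have "\<dots> = l2_inner L (conj_deriv lam x0 f) ((conj_deriv_adj lam x0 ^^ k) g)"
    using Suc supported_smooth_conj_deriv by blast
  also have "\<dots> = l2_inner L f (conj_deriv_adj lam x0 ((conj_deriv_adj lam x0 ^^ k) g))"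
    by (rule conj_deriv_adjoint[OF assms(1-3) Suc(2) supported_smooth_conj_deriv_adj_pow[OF Suc(3)]])
  finally show ?case by simp
qed

lemma deriv_conj_deriv:
  assumes "real_smooth g"
  shows "deriv (conj_deriv lam x0 g) x = deriv (deriv g) x - lam * (2 * g x + 2 * (x - x0) * deriv g x)"
  unfolding conj_deriv_def
  by (rule DERIV_imp_deriv) (auto intro!: derivative_eq_intros real_smooth_has_deriv
      real_smooth_has_second_deriv assms simp: algebra_simps)

lemma deriv_conj_deriv_adj:
  assumes "real_smooth g"
  shows "deriv (conj_deriv_adj lam x0 g) x = - deriv (deriv g) x - lam
      * (2 * g x + 2 * (x - x0) * deriv g x)"
  unfolding conj_deriv_adj_def
  by (rule DERIV_imp_deriv) (auto intro!: derivative_eq_intros real_smooth_has_deriv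
      real_smooth_has_second_deriv assms simp: algebra_simps)

lemma conj_deriv_commutator: assumes "real_smooth g"
    shows "conj_deriv_adj lam x0 (conj_deriv lam x0 g)
        = (\<lambda>x. conj_deriv lam x0 (conj_deriv_adj lam x0 g) x + 4 * lam * g x)"
proof
  fix x
  have e1: "conj_deriv_adj lam x0 (conj_deriv lam x0 g) x = - deriv (conj_deriv lam x0 g) x - lam
      * (2 * (x - x0)) * conj_deriv lam x0 g x"
    by (simp add: conj_deriv_adj_def)
  have e2: "conj_deriv lam x0 (conj_deriv_adj lam x0 g) x = deriv (conj_deriv_adj lam x0 g) x - lam
      * (2 * (x - x0)) * conj_deriv_adj lam x0 g x"
    by (simp add: conj_deriv_def)
  show "conj_deriv_adj lam x0 (conj_deriv lam x0 g) x
      = conj_deriv lam x0 (conj_deriv_adj lam x0 g) x + 4 * lam * g x"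
    unfolding e1 e2 deriv_conj_deriv[OF assms] deriv_conj_deriv_adj[OF assms]
    by (simp add: conj_deriv_def conj_deriv_adj_def algebra_simps)
qed

lemma conj_deriv_adj_add:
  assumes "real_smooth F" "real_smooth G"
  shows "conj_deriv_adj lam x0 (\<lambda>x. F x + a * G x)
      = (\<lambda>x. conj_deriv_adj lam x0 F x + a * conj_deriv_adj lam x0 G x)"
proof
  fix x
  have "deriv (\<lambda>x. 1 * F x + a * G x) x = 1 * deriv F x + a * deriv G x"
    by (rule deriv_linear_combination)
        (use real_smooth_differentiable[OF assms(1), of 0]
            real_smooth_differentiable[OF assms(2), of 0] in auto)
  then show "conj_deriv_adj lam x0 (\<lambda>x. F x + a * G x) x = conj_deriv_adj lam x0 F x + a
      * conj_deriv_adj lam x0 G x"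
    by (simp add: conj_deriv_adj_def algebra_simps)
qed

lemma real_smooth_conj_deriv_adj_pow: "real_smooth f \<Longrightarrow> real_smooth ((conj_deriv_adj lam x0 ^^ k) f)"
  by (induction k) (auto intro: real_smooth_conj_deriv_adj)

lemma real_smooth_conj_deriv_pow: "real_smooth f \<Longrightarrow> real_smooth ((conj_deriv lam x0 ^^ k) f)"
  by (induction k) (auto intro: real_smooth_conj_deriv)

lemma conj_deriv_adj_pow_commutator:
  assumes "real_smooth g"
  shows "(conj_deriv_adj lam x0 ^^ Suc k) (conj_deriv lam x0 g) =
    (\<lambda>x. conj_deriv lam x0 ((conj_deriv_adj lam x0 ^^ Suc k) g) x + real (Suc k) * (4 * lam)
        * (conj_deriv_adj lam x0 ^^ k) g x)"
proof (induction k)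
  case 0 then show ?case using conj_deriv_commutator[OF assms] by (simp add: algebra_simps)
next
  case (Suc k)
  define H where "H = (conj_deriv_adj lam x0 ^^ Suc k) g"
  have CH: "real_smooth H" unfolding H_def by (rule real_smooth_conj_deriv_adj_pow[OF assms])
  have "(conj_deriv_adj lam x0 ^^ Suc (Suc k)) (conj_deriv lam x0 g)
      = conj_deriv_adj lam x0 ((conj_deriv_adj lam x0 ^^ Suc k) (conj_deriv lam x0 g))"
    by simp
  also have "\<dots> = conj_deriv_adj lam x0
      (\<lambda>x. conj_deriv lam x0 H x + (real (Suc k) * (4 * lam)) * (conj_deriv_adj lam x0 ^^ k) g x)"
    using Suc by (simp add: H_def)
  also have "\<dots> = (\<lambda>x. conj_deriv_adj lam x0 (conj_deriv lam x0 H) x + (real (Suc k) * (4 * lam))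
      * conj_deriv_adj lam x0 ((conj_deriv_adj lam x0 ^^ k) g) x)"
    by (rule conj_deriv_adj_add) (auto intro: real_smooth_conj_deriv CH
        real_smooth_conj_deriv_adj_pow assms)
  also have "\<dots> = (\<lambda>x. conj_deriv lam x0 (conj_deriv_adj lam x0 H) x + 4 * lam * H x
      + (real (Suc k) * (4 * lam)) * H x)"
  proof -
    have HH: "conj_deriv_adj lam x0 ((conj_deriv_adj lam x0 ^^ k) g) = H" by (simp add: H_def)
    show ?thesis by (simp only: conj_deriv_commutator[OF CH] HH)
  qed
  also have "\<dots> = (\<lambda>x. conj_deriv lam x0 ((conj_deriv_adj lam x0 ^^ Suc (Suc k)) g) x
      + real (Suc (Suc k)) * (4 * lam) * (conj_deriv_adj lam x0 ^^ Suc k) g x)"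
    by (simp add: H_def algebra_simps)
  finally show ?case .
qed

lemma l2_norm_sq_conj_deriv:
  assumes "0 \<le> L" "0 < c" "d < L" "supported_smooth c d h"
  shows "l2_norm_sq L (conj_deriv lam x0 h) = l2_norm_sq L (conj_deriv_adj lam x0 h) + 4 * lam
      * l2_norm_sq L h"
proof -
  have C: "real_smooth h" using assms(4) by (simp add: supported_smooth_def)
  have "l2_norm_sq L (conj_deriv lam x0 h) = l2_inner L h (conj_deriv_adj lam x0 (conj_deriv lam x0 h))"
    unfolding l2_norm_sq_def by (rule
        conj_deriv_adjoint[OF assms(1-4) supported_smooth_conj_deriv[OF assms(4)]])
  also have "\<dots> = l2_inner L h (\<lambda>x. conj_deriv lam x0 (conj_deriv_adj lam x0 h) x + (4 * lam) * h x)"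
    by (simp add: conj_deriv_commutator[OF C])
  also have "\<dots> = l2_inner L h (conj_deriv lam x0 (conj_deriv_adj lam x0 h)) + 4 * lam * l2_norm_sq L h"
    unfolding l2_norm_sq_def by (rule l2_inner_add_right)
        (auto intro!: real_smooth_continuous_on[OF
            real_smooth_conj_deriv[OF real_smooth_conj_deriv_adj[OF C]]] real_smooth_continuous_on[OF C])
  also have "l2_inner L h (conj_deriv lam x0 (conj_deriv_adj lam x0 h))
      = l2_inner L (conj_deriv_adj lam x0 h) (conj_deriv_adj lam x0 h)"
    by (subst l2_inner_commute) (rule
        conj_deriv_adjoint[OF assms(1-3) supported_smooth_conj_deriv_adj[OF assms(4)] assms(4)])
  finally show ?thesis by (simp add: l2_norm_sq_def)
qed

lemma l2_norm_sq_adj_pow_conj_deriv_ge: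
  assumes "0 \<le> L" "0 < c" "d < L" "supported_smooth c d g" "0 \<le> lam"
  shows "l2_norm_sq L ((conj_deriv_adj lam x0 ^^ k) (conj_deriv lam x0 g)) \<ge>
     l2_norm_sq L ((conj_deriv_adj lam x0 ^^ Suc k) g) + (2 * real k + 1) * (4 * lam)
         * l2_norm_sq L ((conj_deriv_adj lam x0 ^^ k) g)"
proof (cases k)
  case 0 then show ?thesis using l2_norm_sq_conj_deriv[OF assms(1-4)] by simp
next
  case (Suc j)
  have C: "real_smooth g" using assms(4) by (simp add: supported_smooth_def)
  define G where "G = (conj_deriv_adj lam x0 ^^ Suc j) g"
  define H where "H = (conj_deriv_adj lam x0 ^^ j) g"
  have GH: "G = conj_deriv_adj lam x0 H" by (simp add: G_def H_def)
  have nG: "supported_smooth c d G" "supported_smooth c d H"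
    unfolding G_def H_def by (rule supported_smooth_conj_deriv_adj_pow[OF assms(4)])+
  have CG: "real_smooth G" "real_smooth H" using nG by (auto simp: supported_smooth_def)
  have "l2_norm_sq L ((conj_deriv_adj lam x0 ^^ k) (conj_deriv lam x0 g))
      = l2_norm_sq L (\<lambda>x. conj_deriv lam x0 G x + (real (Suc j) * (4 * lam)) * H x)"
    using conj_deriv_adj_pow_commutator[OF C, of j lam x0] Suc by (simp add: G_def H_def)
  also have "\<dots> = l2_norm_sq L (conj_deriv lam x0 G) + 2 * (real (Suc j) * (4 * lam))
      * l2_inner L (conj_deriv lam x0 G) H
      + (real (Suc j) * (4 * lam))^2 * l2_norm_sq L H"
    by (rule l2_norm_sq_add) (auto intro!:
        real_smooth_continuous_on[OF real_smooth_conj_deriv[OF CG(1)]]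
            real_smooth_continuous_on[OF CG(2)])
  also have "l2_inner L (conj_deriv lam x0 G) H = l2_norm_sq L G"
    unfolding l2_norm_sq_def by (simp add: conj_deriv_adjoint[OF assms(1-3) nG] GH[symmetric])
  also have "l2_norm_sq L (conj_deriv lam x0 G) = l2_norm_sq L (conj_deriv_adj lam x0 G) + 4 * lam
      * l2_norm_sq L G"
    by (rule l2_norm_sq_conj_deriv[OF assms(1-3) nG(1)])
  finally have eq: "l2_norm_sq L ((conj_deriv_adj lam x0 ^^ k) (conj_deriv lam x0 g))
      = l2_norm_sq L (conj_deriv_adj lam x0 G) + 4 * lam * l2_norm_sq L G +
      2 * (real (Suc j) * (4 * lam)) * l2_norm_sq L G + (real (Suc j) * (4 * lam))^2 * l2_norm_sq L H" .
  have "0 \<le> l2_norm_sq L H" by (rule l2_norm_sq_nonneg)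
      (auto intro!: real_smooth_continuous_on[OF CG(2)])
  then have "0 \<le> (real (Suc j) * (4 * lam))^2 * l2_norm_sq L H" by simp
  moreover have "conj_deriv_adj lam x0 G = (conj_deriv_adj lam x0 ^^ Suc k) g" by (simp add: G_def Suc)
  moreover have "G = (conj_deriv_adj lam x0 ^^ k) g" by (simp add: G_def Suc)
  ultimately show ?thesis using eq Suc by (simp add: algebra_simps)
qed

lemma l2_norm_sq_conj_deriv_pow_ge:
  assumes "0 \<le> L" "0 < c" "d < L" "supported_smooth c d f" "0 \<le> lam"
  shows "l2_norm_sq L ((conj_deriv lam x0 ^^ Suc m) f) \<ge>
     l2_norm_sq L ((conj_deriv_adj lam x0 ^^ Suc m) f) + (real (Suc m))^2 * (4 * lam)
         * l2_norm_sq L ((conj_deriv_adj lam x0 ^^ m) f)"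
  using assms(4)
proof (induction m arbitrary: f)
  case 0 then show ?case using l2_norm_sq_conj_deriv[OF assms(1-3) 0] by simp
next
  case (Suc m)
  have nB: "supported_smooth c d (conj_deriv lam x0 f)" by (rule supported_smooth_conj_deriv[OF Suc(2)])
  have C: "continuous_on {0..L} ((conj_deriv_adj lam x0 ^^ k) f)" for k
    using supported_smooth_conj_deriv_adj_pow[OF Suc(2), of k lam x0]
    by (auto simp: supported_smooth_def intro: real_smooth_continuous_on)
  have "l2_norm_sq L ((conj_deriv lam x0 ^^ Suc (Suc m)) f)
      = l2_norm_sq L ((conj_deriv lam x0 ^^ Suc m) (conj_deriv lam x0 f))"
    by (simp only: funpow_Suc_right o_apply)
  also have "\<dots> \<ge> l2_norm_sq L ((conj_deriv_adj lam x0 ^^ Suc m) (conj_deriv lam x0 f)) +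
      (real (Suc m))^2 * (4 * lam) * l2_norm_sq L ((conj_deriv_adj lam x0 ^^ m) (conj_deriv lam x0 f))"
    using Suc(1)[OF nB] .
  moreover have "l2_norm_sq L ((conj_deriv_adj lam x0 ^^ Suc m) (conj_deriv lam x0 f)) \<ge>
     l2_norm_sq L ((conj_deriv_adj lam x0 ^^ Suc (Suc m)) f) + (2 * real (Suc m) + 1) * (4 * lam)
         * l2_norm_sq L ((conj_deriv_adj lam x0 ^^ Suc m) f)"
    by (rule l2_norm_sq_adj_pow_conj_deriv_ge[OF assms(1-3) Suc(2) assms(5)])
  moreover have "l2_norm_sq L ((conj_deriv_adj lam x0 ^^ m) (conj_deriv lam x0 f)) \<ge>
     l2_norm_sq L ((conj_deriv_adj lam x0 ^^ Suc m) f) + (2 * real m + 1) * (4 * lam)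
         * l2_norm_sq L ((conj_deriv_adj lam x0 ^^ m) f)"
    by (rule l2_norm_sq_adj_pow_conj_deriv_ge[OF assms(1-3) Suc(2) assms(5)])
  moreover have "0 \<le> l2_norm_sq L ((conj_deriv_adj lam x0 ^^ m) f)" by (rule l2_norm_sq_nonneg[OF C])
  moreover have "0 \<le> l2_norm_sq L ((conj_deriv_adj lam x0 ^^ Suc m) f)" by (rule l2_norm_sq_nonneg[OF C])
  ultimately have X: "l2_norm_sq L ((conj_deriv lam x0 ^^ Suc (Suc m)) f) \<ge> l2_norm_sq L
      ((conj_deriv_adj lam x0 ^^ Suc (Suc m)) f)
      + (2 * real (Suc m) + 1) * (4 * lam) * l2_norm_sq L ((conj_deriv_adj lam x0 ^^ Suc m) f)
      + (real (Suc m))^2 * (4 * lam) * l2_norm_sq L ((conj_deriv_adj lam x0 ^^ m) (conj_deriv lam x0 f))"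
    and B: "l2_norm_sq L ((conj_deriv_adj lam x0 ^^ m) (conj_deriv lam x0 f)) \<ge> l2_norm_sq L
        ((conj_deriv_adj lam x0 ^^ Suc m) f)"
    and Y0: "0 \<le> l2_norm_sq L ((conj_deriv_adj lam x0 ^^ m) f)"
    using assms(5) by (smt (verit) mult_nonneg_nonneg of_nat_0_le_iff)+
  have "(real (Suc m))^2 * (4 * lam)
      * l2_norm_sq L ((conj_deriv_adj lam x0 ^^ m) (conj_deriv lam x0 f)) \<ge>
        (real (Suc m))^2 * (4 * lam) * l2_norm_sq L ((conj_deriv_adj lam x0 ^^ Suc m) f)"
    by (rule mult_left_mono[OF B]) (use assms(5) in simp)
  moreover have "(real (Suc (Suc m)))^2 * (4 * lam) * l2_norm_sq L ((conj_deriv_adj lam x0 ^^ Suc m) f) =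
     (2 * real (Suc m) + 1) * (4 * lam) * l2_norm_sq L ((conj_deriv_adj lam x0 ^^ Suc m) f)
         + (real (Suc m))^2 * (4 * lam) * l2_norm_sq L ((conj_deriv_adj lam x0 ^^ Suc m) f)"
    by (simp add: power2_eq_square algebra_simps)
  ultimately show ?case using X by linarith
qed

lemma integral_square_conj_deriv_pow_ge:
  assumes L: "0 \<le> L" "0 < c" "d < L" and g: "supported_smooth c d g" and h: "supported_smooth c d h"
  shows "l2_norm_sq L ((conj_deriv lam x0 ^^ n) g) - l2_norm_sq L ((conj_deriv_adj lam x0 ^^ n) g)
      + 2 * a * (l2_inner L h ((conj_deriv lam x0 ^^ n) g) + l2_inner L g ((conj_deriv lam x0 ^^ n) h)
        + 2 * V * l2_inner L g h)
    \<le> integral {0..L} (\<lambda>x. (a * h x + V * g x + (conj_deriv lam x0 ^^ n) g x)^2)"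
proof -
  define X where "X = (conj_deriv lam x0 ^^ n) g"
  define Y where "Y = (conj_deriv_adj lam x0 ^^ n) g"
  have cont: "continuous_on {0..L} g" "continuous_on {0..L} h" "continuous_on {0..L} X"
      "continuous_on {0..L} Y"
    using g h by (auto simp: supported_smooth_def X_def Y_def intro!: real_smooth_continuous_on
        real_smooth_conj_deriv_pow real_smooth_conj_deriv_adj_pow)
  have HA: "((\<lambda>x. (a * h x + V * g x + X x)^2) has_integral
      integral {0..L} (\<lambda>x. (a * h x + V * g x + X x)^2)) {0..L}"
    by (rule continuous_on_has_integral) (intro continuous_intros cont)
  have HB: "((\<lambda>x. (- a * h x + V * g x + Y x)^2) has_integral
      integral {0..L} (\<lambda>x. (- a * h x + V * g x + Y x)^2)) {0..L}"
    by (rule continuous_on_has_integral) (intro continuous_intros cont)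
  have "((\<lambda>x. (X x * X x) - (Y x * Y x) + 2*V*((g x * X x) - (g x * Y x))
       + 2*a*((h x * X x) + (h x * Y x) + 2*V*(g x * h x)))
     has_integral (l2_norm_sq L X - l2_norm_sq L Y + 2*V*(l2_inner L g X - l2_inner L g Y)
       + 2*a*(l2_inner L h X + l2_inner L h Y + 2*V*l2_inner L g h))) {0..L}"
    unfolding l2_norm_sq_def
    by (intro has_integral_add has_integral_diff has_integral_mult_right has_integral_l2_inner cont)
  moreover have "(\<lambda>x. (X x * X x) - (Y x * Y x) + 2*V*((g x * X x) - (g x * Y x))
       + 2*a*((h x * X x) + (h x * Y x) + 2*V*(g x * h x)))
    = (\<lambda>x. (a * h x + V * g x + X x)^2 - (- a * h x + V * g x + Y x)^2)"
    by (simp add: fun_eq_iff power2_eq_square algebra_simps)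
  ultimately have diff: "integral {0..L} (\<lambda>x. (a * h x + V * g x + X x)^2)
      - integral {0..L} (\<lambda>x. (- a * h x + V * g x + Y x)^2)
    = l2_norm_sq L X - l2_norm_sq L Y + 2*V*(l2_inner L g X - l2_inner L g Y)
      + 2*a*(l2_inner L h X + l2_inner L h Y + 2*V*l2_inner L g h)"
    using has_integral_unique[OF has_integral_diff[OF HA HB]] by simp
  have "l2_inner L g X = l2_inner L X g"
    by (rule l2_inner_commute)
  also have "\<dots> = l2_inner L g Y"
    unfolding X_def Y_def by (rule conj_deriv_pow_adjoint[OF L g g])
  finally have gX: "l2_inner L g X = l2_inner L g Y" .
  have "l2_inner L g ((conj_deriv lam x0 ^^ n) h) = l2_inner L ((conj_deriv lam x0 ^^ n) h) g"
    by (rule l2_inner_commute)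
  also have "\<dots> = l2_inner L h Y"
    unfolding Y_def by (rule conj_deriv_pow_adjoint[OF L h g])
  finally have hY: "l2_inner L g ((conj_deriv lam x0 ^^ n) h) = l2_inner L h Y" .
  have "0 \<le> integral {0..L} (\<lambda>x. (- a * h x + V * g x + Y x)^2)"
    by (rule has_integral_nonneg[OF HB]) simp
  then show ?thesis
    using diff unfolding X_def[symmetric] Y_def[symmetric] gX hY by simp
qed


section \<open>Weighted energies of powers of the adjoint\<close>

definition deriv_energy :: "real \<Rightarrow> nat \<Rightarrow> (real \<Rightarrow> real) \<Rightarrow> real" where
  "deriv_energy L m f = integral {0..L} (\<lambda>x. ((deriv ^^ m) f x)^2)"

text \<open>The weight \<open>2(x - x0)\<close> is \<open>\<psi>\<^sub>x\<close>.\<close>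

definition weighted_deriv_energy :: "real \<Rightarrow> real \<Rightarrow> nat \<Rightarrow> nat \<Rightarrow> (real \<Rightarrow> real) \<Rightarrow> real" where
  "weighted_deriv_energy L x0 j m f
      = integral {0..L} (\<lambda>x. (2 * (x - x0))^(2 * j) * ((deriv ^^ m) f x)^2)"

definition carleman_term :: "real \<Rightarrow> real \<Rightarrow> real \<Rightarrow> nat \<Rightarrow> (real \<Rightarrow> real) \<Rightarrow> nat \<Rightarrow> real" where
  "carleman_term L x0 lam n f m = lam^(2*(n - m)) * weighted_deriv_energy L x0 (n - m) m f"

definition lower_order_term :: "real \<Rightarrow> real \<Rightarrow> nat \<Rightarrow> (real \<Rightarrow> real) \<Rightarrow> nat \<Rightarrow> real" where
  "lower_order_term L lam n f m = lam^(2*(n - m)) * deriv_energy L m f"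

lemma deriv_energy_nonneg: "real_smooth f \<Longrightarrow> 0 \<le> deriv_energy L m f"
  unfolding deriv_energy_def
  by (rule integral_nonneg) (auto intro!: integrable_continuous_interval continuous_intros)

lemma higher_deriv_conj_deriv_adj:
  assumes "real_smooth f"
  shows "(deriv ^^ m) (conj_deriv_adj lam x0 f) x =
    - ((deriv ^^ Suc m) f x + lam * (2 * (x - x0)) * (deriv ^^ m) f x + 2 * real m * lam
        * (deriv ^^ (m - 1)) f x)"
proof -
  have "(deriv ^^ m) (conj_deriv_adj lam x0 f) =
      (deriv ^^ m) (\<lambda>y. (-1) * deriv f y + (-1) * (((2*lam) * y + (-2*lam*x0)) * f y))"
    by (simp only: conj_deriv_adj_affine)
  also have "\<dots> = (\<lambda>y. (-1) * (deriv ^^ m) (deriv f) y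
      + (-1) * (deriv ^^ m) (\<lambda>y. ((2*lam) * y + (-2*lam*x0)) * f y) y)"
    by (rule higher_deriv_linear_combination[OF real_smooth_deriv[OF assms]
        real_smooth_affine_mult[OF assms]])
  also have "\<dots> = (\<lambda>y. (-1) * (deriv ^^ Suc m) f y + (-1)
      * (((2*lam) * y + (-2*lam*x0)) * (deriv ^^ m) f y
      + real m * (2*lam) * (deriv ^^ (m-1)) f y))"
    by (simp only: higher_deriv_affine_mult[OF assms] higher_deriv_Suc')
  finally show ?thesis by (simp add: algebra_simps)
qed

lemma cross_term_lower_bound:
  fixes r R a b :: real
  assumes "\<bar>r\<bar> \<le> R"
  shows "0 \<le> R * (a^2 + b^2) + 2 * r * (a * b)"
proof -
  have ab: "2 * \<bar>a * b\<bar> \<le> a^2 + b^2"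
    using sum_squares_bound[of "\<bar>a\<bar>" "\<bar>b\<bar>"] by (simp add: abs_mult)
  have "\<bar>r\<bar> * (2 * \<bar>a * b\<bar>) \<le> R * (a^2 + b^2)"
    using mult_mono[OF assms ab] assms by force
  moreover have "- (2 * r * (a * b)) \<le> \<bar>r\<bar> * (2 * \<bar>a * b\<bar>)"
    using abs_ge_minus_self[of "r * (a * b)"] by (simp add: abs_mult algebra_simps)
  ultimately show ?thesis by linarith
qed

lemma sum_three_square_le: "(x + y + z)^2 \<le> 3 * (x^2 + y^2 + (z::real)^2)"
proof -
  have "0 \<le> (x - y)^2 + (y - z)^2 + (x - z)^2" by simp
  then show ?thesis by (simp add: power2_eq_square algebra_simps)
qed

lemma square_expansion_lower_bound:
  fixes A B E pp lam q R Q m :: real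
  assumes "0 \<le> q" "q \<le> Q" "\<bar>q * pp\<bar> \<le> R" "0 \<le> m" "0 \<le> lam"
  shows "lam * q * (A + lam * pp * B + 2 * m * lam * E)^2 \<ge>
     lam * q * A^2 + lam^3 * (q * pp^2) * B^2 + lam^2 * ((q * pp) * (2 * A * B))
     - 2 * m * (Q + R) * (A^2 + lam^2 * B^2 + lam^4 * E^2)"
proof -
  define r where "r = q * pp"
  have R0: "0 \<le> R" using assms(3) by linarith
  have X1: "0 \<le> q * (A + lam^2 * E)^2 + (Q - q) * (A^2 + lam^4 * E^2)"
    using assms(1,2) by (intro add_nonneg_nonneg mult_nonneg_nonneg) auto
  have "0 \<le> R * ((lam * B)^2 + (lam^2 * E)^2) + 2 * r * ((lam * B) * (lam^2 * E))"
    by (rule cross_term_lower_bound) (use assms(3) in \<open>simp add: r_def\<close>)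
  then have X2: "0 \<le> R * (lam^2 * B^2 + lam^4 * E^2) + 2 * r * (lam^3 * E * B)"
    by (simp add: power_mult_distrib power_def algebra_simps)
  have X3: "0 \<le> 2 * m * Q * lam^2 * B^2 + 2 * m * R * A^2 + 4 * m^2 * lam^3 * q * E^2"
    using assms R0 by (intro add_nonneg_nonneg mult_nonneg_nonneg) auto
  have "lam * q * (A + lam * pp * B + 2 * m * lam * E)^2 -
     (lam * q * A^2 + lam^3 * (q * pp^2) * B^2 + lam^2 * ((q * pp) * (2 * A * B))
     - 2 * m * (Q + R) * (A^2 + lam^2 * B^2 + lam^4 * E^2)) =
     2 * m * (q * (A + lam^2 * E)^2 + (Q - q) * (A^2 + lam^4 * E^2)) +
     2 * m * (R * (lam^2 * B^2 + lam^4 * E^2) + 2 * r * (lam^3 * E * B)) +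
     (2 * m * Q * lam^2 * B^2 + 2 * m * R * A^2 + 4 * m^2 * lam^3 * q * E^2)"
    unfolding r_def by (simp add: power_def algebra_simps)
  moreover have "0 \<le> 2 * m * (q * (A + lam^2 * E)^2 + (Q - q) * (A^2 + lam^4 * E^2))"
    using X1 assms(4) by simp
  moreover have "0 \<le> 2 * m * (R * (lam^2 * B^2 + lam^4 * E^2) + 2 * r * (lam^3 * E * B))"
    using X2 assms(4) by simp
  ultimately show ?thesis using X3 by linarith
qed

lemma conj_adj_energy_density_lower_bound:
  fixes a b e pp lam u q qa qb Q R PP C K G m s z :: real
  assumes "1 \<le> lam" "0 \<le> u" "0 \<le> q" "q \<le> Q" "\<bar>q * pp\<bar> \<le> R" "pp^2 \<le> PP" "0 \<le> m" "0 \<le> C" "0 \<le> K" "0 \<le> s"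
    and qa: "qa = q * pp" and qb: "qb = q * pp^2"
    and c1: "C * 2 * m * (Q + R) + 3 * K \<le> G"
    and c2: "C * s * 2 * Q + C * 2 * m * (Q + R) + 3 * K * PP \<le> G"
    and c3: "C * 2 * m * (Q + R) + 12 * K * m^2 \<le> G * z"
  shows "lam * C * u * (q * (a + lam * pp * b + 2 * m * lam * e)^2) - K * u
      * (a + lam * pp * b + 2 * m * lam * e)^2 \<ge>
    C * (lam * u * (q * a^2) + lam^3 * u * (qb * b^2)) + C * u * lam^2
        * (qa * (2 * a * b) + s * 2 * (q * b^2))
    - G * (u * a^2 + u * lam^2 * b^2 + z * (u * lam^4 * e^2))"
proof -
  define X where "X = a + lam * pp * b + 2 * m * lam * e"
  have S1: "0 \<le> lam * q * X^2
      - (lam * q * a^2 + lam^3 * (q * pp^2) * b^2 + lam^2 * ((q * pp) * (2 * a * b))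
     - 2 * m * (Q + R) * (a^2 + lam^2 * b^2 + lam^4 * e^2))"
    using square_expansion_lower_bound[OF assms(3,4,5,7), of lam a b e] assms(1) unfolding X_def
    by linarith
  have "X^2 \<le> 3 * (a^2 + (lam * pp * b)^2 + (2 * m * lam * e)^2)"
    unfolding X_def by (rule sum_three_square_le)
  also have "(lam * pp * b)^2 = lam^2 * pp^2 * b^2" by (simp add: power_mult_distrib)
  also have "(2 * m * lam * e)^2 = 4 * m^2 * lam^2 * e^2" by (simp add: power_mult_distrib)
  also have "lam^2 * pp^2 * b^2 \<le> lam^2 * PP * b^2"
    using assms(6) by (intro mult_right_mono mult_left_mono) auto
  also have "4 * m^2 * lam^2 * e^2 \<le> 4 * m^2 * lam^4 * e^2"
  proof -
    have "lam^2 \<le> lam^4" using assms(1) by (intro power_increasing) auto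
    then show ?thesis by (intro mult_right_mono mult_left_mono) auto
  qed
  finally have S2: "0 \<le> 3 * (a^2 + lam^2 * PP * b^2 + 4 * m^2 * lam^4 * e^2) - X^2" by simp
  have T1: "0 \<le> C * u * (lam * q * X^2
      - (lam * q * a^2 + lam^3 * (q * pp^2) * b^2 + lam^2 * ((q * pp) * (2 * a * b))
     - 2 * m * (Q + R) * (a^2 + lam^2 * b^2 + lam^4 * e^2)))"
    using S1 assms by simp
  have T2: "0 \<le> K * u * (3 * (a^2 + lam^2 * PP * b^2 + 4 * m^2 * lam^4 * e^2) - X^2)"
    using S2 assms by simp
  have T3: "0 \<le> C * u * lam^2 * s * 2 * (Q - q) * b^2"
    using assms by simp
  have T4: "0 \<le> (G - (C * 2 * m * (Q + R) + 3 * K)) * (u * a^2)"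
    using assms c1 by simp
  have T5: "0 \<le> (G - (C * s * 2 * Q + C * 2 * m * (Q + R) + 3 * K * PP)) * (u * lam^2 * b^2)"
    using assms c2 by simp
  have T6: "0 \<le> (G * z - (C * 2 * m * (Q + R) + 12 * K * m^2)) * (u * lam^4 * e^2)"
    using assms c3 by simp
  have "lam * C * u * (q * X^2) - K * u * X^2 -
    (C * (lam * u * (q * a^2) + lam^3 * u * (qb * b^2)) + C * u * lam^2
        * (qa * (2 * a * b) + s * 2 * (q * b^2))
    - G * (u * a^2 + u * lam^2 * b^2 + z * (u * lam^4 * e^2))) =
    C * u * (lam * q * X^2 - (lam * q * a^2 + lam^3 * (q * pp^2) * b^2 + lam^2 * ((q * pp) * (2 * a * b))
     - 2 * m * (Q + R) * (a^2 + lam^2 * b^2 + lam^4 * e^2))) +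
    K * u * (3 * (a^2 + lam^2 * PP * b^2 + 4 * m^2 * lam^4 * e^2) - X^2) +
    C * u * lam^2 * s * 2 * (Q - q) * b^2 +
    (G - (C * 2 * m * (Q + R) + 3 * K)) * (u * a^2) +
    (G - (C * s * 2 * Q + C * 2 * m * (Q + R) + 3 * K * PP)) * (u * lam^2 * b^2) +
    (G * z - (C * 2 * m * (Q + R) + 12 * K * m^2)) * (u * lam^4 * e^2)"
    unfolding qa qb by (simp add: algebra_simps)
  then show ?thesis using T1 T2 T3 T4 T5 T6 unfolding X_def by linarith
qed

lemma has_integral_weight_square_deriv:
  assumes "0 \<le> L" "0 < c" "d < L" "supported_smooth c d F"
  shows "((\<lambda>x. (2 * (x - x0))^(2 * j + 1) * (2 * deriv F x * F x) + (2 * real j + 1) * 2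
      * ((2 * (x - x0))^(2 * j) * (F x)^2))
     has_integral 0) {0..L}"
proof -
  have C: "real_smooth F" "vanishes_outside c d F" using assms(4) by (auto simp: supported_smooth_def)
  have f0: "F 0 = 0" "F L = 0" using assms(2,3) C(2) by (auto simp: vanishes_outside_def)
  have "((\<lambda>x. (2 * (x - x0))^(2 * j + 1) * (2 * deriv F x * F x) + (2 * real j + 1) * 2
      * ((2 * (x - x0))^(2 * j) * (F x)^2))
     has_integral ((2 * (L - x0))^(2 * j + 1) * (F L)^2 - (2 * (0 - x0))^(2 * j + 1) * (F 0)^2)) {0..L}"
  proof (rule fundamental_theorem_of_calculus[OF assms(1)])
    fix x assume "x \<in> {0..L}"
    have d1: "((\<lambda>x. (2 * (x - x0))^Suc (2 * j)) has_field_derivative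
        ((1 + real (2 * j)) * (2 * (2 * (x - x0))^(2 * j)))) (at x)"
      by (intro DERIV_power_Suc) (auto intro!: derivative_eq_intros)
    have d2: "((\<lambda>x. F x * F x) has_field_derivative (deriv F x * F x + F x * deriv F x)) (at x)"
      by (auto intro!: derivative_eq_intros real_smooth_has_deriv[OF C(1)])
    have d3: "((\<lambda>x. (2 * (x - x0))^Suc (2 * j) * (F x * F x)) has_field_derivative
        ((2 * (x - x0))^(2 * j + 1) * (2 * deriv F x * F x) + (2 * real j + 1) * 2
            * ((2 * (x - x0))^(2 * j) * (F x)^2))) (at x)"
      using DERIV_mult[OF d1 d2] by (simp add: power2_eq_square algebra_simps)
    have eq: "(\<lambda>x. (2 * (x - x0))^(2 * j + 1) * (F x)^2)
        = (\<lambda>x. (2 * (x - x0))^Suc (2 * j) * (F x * F x))"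
      by (simp add: power2_eq_square)
    from d3 have "((\<lambda>x. (2 * (x - x0))^(2 * j + 1) * (F x)^2) has_field_derivative
        ((2 * (x - x0))^(2 * j + 1) * (2 * deriv F x * F x) + (2 * real j + 1) * 2
            * ((2 * (x - x0))^(2 * j) * (F x)^2))) (at x)"
      by (simp only: eq)
    then show "((\<lambda>x. (2 * (x - x0))^(2 * j + 1) * (F x)^2) has_vector_derivative
        ((2 * (x - x0))^(2 * j + 1) * (2 * deriv F x * F x) + (2 * real j + 1) * 2
            * ((2 * (x - x0))^(2 * j) * (F x)^2)))
        (at x within {0..L})"
      by (simp add: has_real_derivative_iff_has_vector_derivative[symmetric]
          has_field_derivative_at_within)
  qed
  then show ?thesis using f0 by simp
qed

text \<open>With \<open>a, b, e\<close> the derivatives of \<open>f\<close> of order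
  \<open>m + 1, m, m - 1\<close> and \<open>p = \<psi>\<^sub>x\<close>, the bracket \<open>a + \<lambda>pb + 2m\<lambda>e\<close> on the right is
  \<open>-(B\<^sup>*f)\<^sup>(\<^sup>m\<^sup>)\<close>. Its weighted square dominates the two leading terms of the next level and
  a term whose integral vanishes, up to lower order terms paid for by \<open>G\<close>.\<close>

lemma conj_adj_energy_density_at:
  fixes a b e p P C K G lam :: real and j m :: nat
  assumes lam: "1 \<le> lam" and p: "\<bar>p\<bar> \<le> P" "1 \<le> P" and "0 \<le> C" "0 \<le> K"
    and G: "C * (2 * real j + 1) * 2 * P^(2*j) + C * 2 * real m * (P^(2*j) + P^(2*j+1)) + 3 * K
        * P^2 \<le> G"
    and G': "m \<noteq> 0 \<Longrightarrow> C * 2 * real m * (P^(2*j) + P^(2*j+1)) + 12 * K * (real m)^2 \<le> G"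
  shows "C * (lam^(2*j+1) * (p^(2*j) * a^2) + lam^(2*j+3) * (p^(2*j+2) * b^2))
      + C * lam^(2*j+2) * (p^(2*j+1) * (2 * a * b) + (2 * real j + 1) * 2 * (p^(2*j) * b^2))
      - G * (lam^(2*j) * a^2 + lam^(2*j+2) * b^2 + (if m = 0 then 0 else lam^(2*j+4) * e^2))
    \<le> C * lam^(2*j+1) * (p^(2*j) * (a + lam * p * b + 2 * real m * lam * e)^2)
      - K * lam^(2*j) * (a + lam * p * b + 2 * real m * lam * e)^2"
proof -
  define z :: real where "z = (if m = 0 then 0 else 1)"
  have abs_pow_le: "\<bar>p\<bar>^i \<le> P^i" for i
    using p by (auto intro: power_mono)
  have pow_le: "p^i \<le> P^i" for i
    using abs_pow_le[of i] abs_ge_self[of "p^i"] by (simp add: power_abs)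
  have c1: "C * 2 * real m * (P^(2*j) + P^(2*j+1)) + 3 * K \<le> G"
  proof -
    have "3 * K \<le> 3 * K * P^2"
      using p(2) \<open>0 \<le> K\<close> mult_left_mono[OF one_le_power[of P 2], of "3 * K"] by simp
    moreover have "0 \<le> C * (2 * real j + 1) * 2 * P^(2*j)"
      using \<open>0 \<le> C\<close> p(2) by simp
    ultimately show ?thesis using G by linarith
  qed
  have c3: "C * 2 * real m * (P^(2*j) + P^(2*j+1)) + 12 * K * (real m)^2 \<le> G * z"
    using G' by (cases "m = 0") (auto simp: z_def)
  have "lam * C * lam^(2*j) * (p^(2*j) * (a + lam * p * b + 2 * real m * lam * e)^2)
      - K * lam^(2*j) * (a + lam * p * b + 2 * real m * lam * e)^2 \<ge>
    C * (lam * lam^(2*j) * (p^(2*j) * a^2) + lam^3 * lam^(2*j) * ((p^(2*j) * p^2) * b^2))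
      + C * lam^(2*j) * lam^2 * ((p^(2*j) * p) * (2 * a * b) + (2 * real j + 1) * 2 * (p^(2*j) * b^2))
      - G * (lam^(2*j) * a^2 + lam^(2*j) * lam^2 * b^2 + z * (lam^(2*j) * lam^4 * e^2))"
  proof (rule conj_adj_energy_density_lower_bound[OF lam, where Q = "P^(2*j)" and R = "P^(2*j+1)"
      and PP = "P^2"])
    show "\<bar>p^(2*j) * p\<bar> \<le> P^(2*j+1)"
      using abs_pow_le[of "2*j+1"] by (simp add: abs_mult power_abs mult.commute)
    show "p^2 \<le> P^2"
      using abs_pow_le[of 2] by simp
  qed (use assms c1 c3 pow_le[of "2*j"] in simp_all)
  moreover have pow_split: "lam^(2*j+1) = lam * lam^(2*j)" "lam^(2*j+3) = lam^3 * lam^(2*j)"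
    "lam^(2*j+2) = lam^(2*j) * lam^2" "lam^(2*j+4) = lam^(2*j) * lam^4"
    "p^(2*j+2) = p^(2*j) * p^2" "p^(2*j+1) = p^(2*j) * p"
    by (simp_all only: power_add power_one_right mult.commute)
  ultimately show ?thesis
    unfolding pow_split by (cases "m = 0") (simp_all add: z_def mult_ac)
qed

lemma carleman_term_conj_deriv_adj_lower_bound:
  assumes L: "0 \<le> L" "0 < c" "d < L" and f: "supported_smooth c d f"
    and lam: "1 \<le> lam" and mk: "m \<le> k" and K: "0 \<le> K"
    and P: "\<And>x. x \<in> {0..L} \<Longrightarrow> \<bar>2 * (x - x0)\<bar> \<le> P" "1 \<le> P"
    and G: "real (k choose m) * (2 * real (k - m) + 1) * 2 * P^(2*(k-m))
        + real (k choose m) * 2 * real m * (P^(2*(k-m)) + P^(2*(k-m)+1)) + 3 * K * P^2 \<le> G"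
    and G': "m \<noteq> 0 \<Longrightarrow>
        real (k choose m) * 2 * real m * (P^(2*(k-m)) + P^(2*(k-m)+1)) + 12 * K * (real m)^2 \<le> G"
  shows "real (k choose m) * lam
      * (carleman_term L x0 lam (Suc k) f (Suc m) + carleman_term L x0 lam (Suc k) f m)
      - G * (lower_order_term L lam (Suc k) f (Suc m) + lower_order_term L lam (Suc k) f m
        + (if m = 0 then 0 else lower_order_term L lam (Suc k) f (m - 1)))
    \<le> real (k choose m) * lam * carleman_term L x0 lam k (conj_deriv_adj lam x0 f) m
      - K * lower_order_term L lam k (conj_deriv_adj lam x0 f) m"
proof -
  define j where "j = k - m"
  define C where "C = real (k choose m)"
  define g where "g = conj_deriv_adj lam x0 f"
  define p where "p x = 2 * (x - x0)" for x
  define a where "a x = (deriv ^^ Suc m) f x" for x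
  define b where "b x = (deriv ^^ m) f x" for x
  define e where "e x = (deriv ^^ (m - 1)) f x" for x
  have Cf: "real_smooth f" and Cg: "real_smooth g"
    using f by (auto simp: supported_smooth_def g_def intro: real_smooth_conj_deriv_adj)
  have int: "((\<lambda>x. ((deriv ^^ i) h x)^2) has_integral deriv_energy L i h) {0..L}"
    "((\<lambda>x. p x^(2*l) * ((deriv ^^ i) h x)^2) has_integral weighted_deriv_energy L x0 l i h) {0..L}"
    if "real_smooth h" for h i l
    unfolding deriv_energy_def weighted_deriv_energy_def p_def
    by (rule continuous_on_has_integral, use that in \<open>auto intro!: continuous_intros\<close>)+
  have Dg: "((deriv ^^ m) g x)^2 = (a x + lam * p x * b x + 2 * real m * lam * e x)^2" for x
    unfolding g_def a_def b_def e_def p_def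
    by (simp only: higher_deriv_conj_deriv_adj[OF Cf] power2_minus)
  have HL: "((\<lambda>x. C * lam^(2*j+1) * (p x^(2*j) * (a x + lam * p x * b x + 2 * real m * lam * e x)^2)
        - K * lam^(2*j) * (a x + lam * p x * b x + 2 * real m * lam * e x)^2)
      has_integral (C * lam^(2*j+1) * weighted_deriv_energy L x0 j m g - K * lam^(2*j)
          * deriv_energy L m g)) {0..L}"
    unfolding Dg[symmetric] by (intro has_integral_diff has_integral_mult_right int Cg)
  have fm: "supported_smooth c d ((deriv ^^ m) f)"
    using f real_smooth_higher_deriv[OF Cf, of m] vanishes_outside_higher_deriv[of c d f m]
    by (auto simp: supported_smooth_def)
  have cross: "((\<lambda>x. p x^(2*j+1) * (2 * a x * b x) + (2 * real j + 1) * 2 * (p x^(2*j) * (b x)^2))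
      has_integral 0) {0..L}"
    using has_integral_weight_square_deriv[OF L fm, of x0 j] unfolding p_def a_def b_def by simp
  have low: "((\<lambda>x. if m = 0 then 0 else lam^(2*j+4) * (e x)^2)
      has_integral (if m = 0 then 0 else lam^(2*j+4) * deriv_energy L (m - 1) f)) {0..L}"
    using int(1)[OF Cf, where i = "m - 1"] by (auto simp: e_def intro: has_integral_mult_right)
  have HR: "((\<lambda>x. C * (lam^(2*j+1) * (p x^(2*j) * (a x)^2) + lam^(2*j+3) * (p x^(2*j+2) * (b x)^2))
      + C * lam^(2*j+2) * (p x^(2*j+1) * (2 * a x * b x) + (2 * real j + 1) * 2 * (p x^(2*j) * (b x)^2))
      - G * (lam^(2*j) * (a x)^2 + lam^(2*j+2) * (b x)^2 + (if m = 0 then 0 else lam^(2*j+4) * (e x)^2)))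
    has_integral (C * (lam^(2*j+1) * weighted_deriv_energy L x0 j (Suc m) f
        + lam^(2*j+3) * weighted_deriv_energy L x0 (Suc j) m f) + C * lam^(2*j+2) * 0
      - G * (lam^(2*j) * deriv_energy L (Suc m) f + lam^(2*j+2) * deriv_energy L m f
        + (if m = 0 then 0 else lam^(2*j+4) * deriv_energy L (m - 1) f)))) {0..L}"
  proof -
    have "((\<lambda>x. p x^(2*j) * (a x)^2) has_integral weighted_deriv_energy L x0 j (Suc m) f) {0..L}"
      "((\<lambda>x. p x^(2*j+2) * (b x)^2) has_integral weighted_deriv_energy L x0 (Suc j) m f) {0..L}"
      "((\<lambda>x. (a x)^2) has_integral deriv_energy L (Suc m) f) {0..L}"
      "((\<lambda>x. (b x)^2) has_integral deriv_energy L m f) {0..L}"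
      using int(1)[OF Cf, where i = "Suc m"] int(1)[OF Cf, where i = m]
        int(2)[OF Cf, where i = "Suc m" and l = j] int(2)[OF Cf, where i = m and l = "Suc j"]
      by (simp_all add: a_def b_def mult_2_right)
    then show ?thesis
      by (intro has_integral_diff has_integral_add has_integral_mult_right cross low)
  qed
  have "C * (lam^(2*j+1) * weighted_deriv_energy L x0 j (Suc m) f + lam^(2*j+3)
      * weighted_deriv_energy L x0 (Suc j) m f)
      + C * lam^(2*j+2) * 0
      - G * (lam^(2*j) * deriv_energy L (Suc m) f + lam^(2*j+2) * deriv_energy L m f
        + (if m = 0 then 0 else lam^(2*j+4) * deriv_energy L (m - 1) f))
    \<le> C * lam^(2*j+1) * weighted_deriv_energy L x0 j m g - K * lam^(2*j) * deriv_energy L m g"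
  proof (rule has_integral_le[OF HR HL])
    fix x assume "x \<in> {0..L}"
    show "C * (lam^(2*j+1) * (p x^(2*j) * (a x)^2) + lam^(2*j+3) * (p x^(2*j+2) * (b x)^2))
      + C * lam^(2*j+2) * (p x^(2*j+1) * (2 * a x * b x) + (2 * real j + 1) * 2 * (p x^(2*j) * (b x)^2))
      - G * (lam^(2*j) * (a x)^2 + lam^(2*j+2) * (b x)^2 + (if m = 0 then 0 else lam^(2*j+4) * (e x)^2))
      \<le> C * lam^(2*j+1) * (p x^(2*j) * (a x + lam * p x * b x + 2 * real m * lam * e x)^2)
        - K * lam^(2*j) * (a x + lam * p x * b x + 2 * real m * lam * e x)^2"
      by (rule conj_adj_energy_density_at[OF lam _ P(2)])
        (use P(1)[OF \<open>x \<in> {0..L}\<close>] K G G' in \<open>simp_all add: p_def C_def j_def\<close>)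
  qed
  moreover have "Suc k - Suc m = j" "Suc k - m = Suc j" "m \<noteq> 0 \<Longrightarrow> Suc k - (m - 1) = j + 2"
    using mk by (auto simp: j_def)
  ultimately show ?thesis
    unfolding carleman_term_def lower_order_term_def C_def[symmetric] g_def[symmetric] j_def[symmetric]
    by (cases "m = 0") (simp_all add: power_add algebra_simps power2_eq_square power3_eq_cube
        power4_eq_xxxx)
qed

definition carleman_energy :: "real \<Rightarrow> real \<Rightarrow> real \<Rightarrow> nat \<Rightarrow> (real \<Rightarrow> real) \<Rightarrow> real" where
  "carleman_energy L x0 lam n f = (\<Sum>m\<le>n. real (n choose m) * carleman_term L x0 lam n f m)"

definition lower_order_energy :: "real \<Rightarrow> real \<Rightarrow> nat \<Rightarrow> (real \<Rightarrow> real) \<Rightarrow> real" where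
  "lower_order_energy L lam n f = (\<Sum>m\<le>n. lower_order_term L lam n f m)"

lemma sum_binomial_pascal:
  fixes F :: "nat \<Rightarrow> real"
  shows "(\<Sum>m\<le>k. real (k choose m) * (F (Suc m) + F m)) = (\<Sum>m\<le>Suc k. real (Suc k choose m) * F m)"
proof -
  have "(\<Sum>m\<le>k. real (k choose m) * F m) = (\<Sum>m\<le>Suc k. real (k choose m) * F m)"
    by simp
  also have "\<dots> = F 0 + (\<Sum>m\<le>k. real (k choose Suc m) * F (Suc m))"
    by (subst sum.atMost_Suc_shift) simp
  finally have a: "(\<Sum>m\<le>k. real (k choose m) * F m) = F 0 + (\<Sum>m\<le>k. real (k choose Suc m) * F (Suc m))" .
  have "(\<Sum>m\<le>Suc k. real (Suc k choose m) * F m) = F 0 + (\<Sum>m\<le>k. real (Suc k choose Suc m) * F (Suc m))"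
    by (subst sum.atMost_Suc_shift) simp
  also have "\<dots> = F 0 + (\<Sum>m\<le>k. real (k choose m) * F (Suc m)) + (\<Sum>m\<le>k. real (k choose Suc m) * F (Suc m))"
    by (simp add: sum.distrib algebra_simps)
  finally show ?thesis using a by (simp add: sum.distrib algebra_simps)
qed

lemma carleman_energy_Suc:
  "lam * carleman_energy L x0 lam (Suc k) f = (\<Sum>m\<le>k. real (k choose m) * lam
      * (carleman_term L x0 lam (Suc k) f (Suc m) + carleman_term L x0 lam (Suc k) f m))"
  using sum_binomial_pascal[of k "\<lambda>m. lam * carleman_term L x0 lam (Suc k) f m"]
  by (simp add: carleman_energy_def sum_distrib_left algebra_simps del: sum.atMost_Suc)

lemma sum_neighbours_le:
  fixes e :: "nat \<Rightarrow> real"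
  assumes "\<And>i. 0 \<le> e i"
  shows "(\<Sum>m\<le>k. e (Suc m) + e m + (if m = 0 then 0 else e (m - 1))) \<le> 3 * (real k + 1) * (\<Sum>i\<le>Suc k. e i)"
proof -
  have e_le: "e i \<le> (\<Sum>i\<le>Suc k. e i)" if "i \<le> Suc k" for i
    by (rule member_le_sum) (use that assms in auto)
  have "(\<Sum>m\<le>k. e (Suc m) + e m + (if m = 0 then 0 else e (m - 1))) \<le> (\<Sum>m\<le>k. 3 * (\<Sum>i\<le>Suc k. e i))"
  proof (rule sum_mono)
    fix m assume "m \<in> {..k}"
    then have "e (Suc m) \<le> (\<Sum>i\<le>Suc k. e i)" "e m \<le> (\<Sum>i\<le>Suc k. e i)"
      "e (m - 1) \<le> (\<Sum>i\<le>Suc k. e i)" "0 \<le> (\<Sum>i\<le>Suc k. e i)"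
      by (auto intro: e_le sum_nonneg assms simp del: sum.atMost_Suc)
    then show "e (Suc m) + e m + (if m = 0 then 0 else e (m - 1)) \<le> 3 * (\<Sum>i\<le>Suc k. e i)"
      by (cases "m = 0") (simp_all del: sum.atMost_Suc)
  qed
  then show ?thesis by (simp add: algebra_simps del: sum.atMost_Suc)
qed

lemma ex_upper_bound_atMost:
  fixes f :: "nat \<Rightarrow> real"
  shows "\<exists>G\<ge>0. \<forall>m\<le>k. f m \<le> G"
proof (intro exI conjI allI impI)
  show "0 \<le> (\<Sum>i\<le>k. \<bar>f i\<bar>)" by (simp add: sum_nonneg)
  fix m assume "m \<le> k"
  then have "\<bar>f m\<bar> \<le> (\<Sum>i\<le>k. \<bar>f i\<bar>)"
    by (intro member_le_sum) auto
  then show "f m \<le> (\<Sum>i\<le>k. \<bar>f i\<bar>)"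
    using abs_ge_self[of "f m"] by linarith
qed

lemma carleman_energy_le_conj_deriv_adj_pow:
  assumes "0 < L"
  shows "\<exists>K\<ge>0. \<forall>c d f lam. 0 < c \<longrightarrow> d < L \<longrightarrow> supported_smooth c d f \<longrightarrow> 1 \<le> lam \<longrightarrow>
    lam * carleman_energy L x0 lam k f - K * lower_order_energy L lam k f
      \<le> lam * l2_norm_sq L ((conj_deriv_adj lam x0 ^^ k) f)"
proof (induction k)
  case 0
  have "carleman_energy L x0 lam 0 f = l2_norm_sq L f" for lam f
    by (simp add: carleman_energy_def carleman_term_def weighted_deriv_energy_def l2_norm_sq_def
        l2_inner_def power2_eq_square)
  then show ?case by auto
next
  case (Suc k)
  then obtain K where K: "0 \<le> K" and IH: "\<And>c d f lam. 0 < c \<Longrightarrow> d < L \<Longrightarrow> supported_smooth c d f \<Longrightarrow> 1 \<le> lam \<Longrightarrow>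
    lam * carleman_energy L x0 lam k f - K * lower_order_energy L lam k f
      \<le> lam * l2_norm_sq L ((conj_deriv_adj lam x0 ^^ k) f)" by blast
  define P where "P = 1 + 2 * (\<bar>x0\<bar> + L)"
  have P: "\<bar>2 * (x - x0)\<bar> \<le> P" if "x \<in> {0..L}" for x
    using that by (auto simp: P_def abs_le_iff)
  have P1: "1 \<le> P" using assms by (simp add: P_def)
  define G1 where "G1 m = real (k choose m) * (2 * real (k - m) + 1) * 2 * P^(2*(k-m))
    + real (k choose m) * 2 * real m * (P^(2*(k-m)) + P^(2*(k-m)+1)) + 3 * K * P^2" for m
  define G2 where "G2 m = real (k choose m) * 2 * real m * (P^(2*(k-m)) + P^(2*(k-m)+1)) + 12 * K
      * (real m)^2" for m
  obtain G where G0: "0 \<le> G" and G: "\<And>m. m \<le> k \<Longrightarrow> G1 m \<le> G \<and> G2 m \<le> G"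
    using ex_upper_bound_atMost[of k "\<lambda>m. max (G1 m) (G2 m)"] by auto
  show ?case
  proof (intro exI[of _ "3 * G * (real k + 1)"] conjI allI impI)
    fix c d f and lam :: real
    assume c: "0 < c" and d: "d < L" and f: "supported_smooth c d f" and lam: "1 \<le> lam"
    define g where "g = conj_deriv_adj lam x0 f"
    define T where "T = carleman_term L x0 lam (Suc k) f"
    define E where "E = lower_order_term L lam (Suc k) f"
    have E0: "0 \<le> E i" for i
      using f lam deriv_energy_nonneg[of f L i]
      by (auto simp: E_def lower_order_term_def supported_smooth_def)
    have "lam * carleman_energy L x0 lam (Suc k) f
        - G * (\<Sum>m\<le>k. E (Suc m) + E m + (if m = 0 then 0 else E (m - 1)))
      = (\<Sum>m\<le>k. real (k choose m) * lam * (T (Suc m) + T m)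
          - G * (E (Suc m) + E m + (if m = 0 then 0 else E (m - 1))))"
      by (simp add: carleman_energy_Suc T_def sum_subtractf sum_distrib_left)
    also have "\<dots> \<le> (\<Sum>m\<le>k. real (k choose m) * lam * carleman_term L x0 lam k g m
        - K * lower_order_term L lam k g m)"
      unfolding T_def E_def g_def
      by (rule sum_mono, rule carleman_term_conj_deriv_adj_lower_bound[where P = P])
        (use assms c d f lam K P P1 G in \<open>auto simp: G1_def G2_def\<close>)
    also have "\<dots> \<le> lam * l2_norm_sq L ((conj_deriv_adj lam x0 ^^ Suc k) f)"
      using IH[OF c d supported_smooth_conj_deriv_adj[OF f] lam]
      by (simp add: g_def carleman_energy_def lower_order_energy_def sum_subtractf sum_distrib_left
          mult_ac funpow_Suc_right del: funpow.simps)
    finally have "lam * carleman_energy L x0 lam (Suc k) f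
        - G * (\<Sum>m\<le>k. E (Suc m) + E m + (if m = 0 then 0 else E (m - 1)))
      \<le> lam * l2_norm_sq L ((conj_deriv_adj lam x0 ^^ Suc k) f)" .
    moreover have "G * (\<Sum>m\<le>k. E (Suc m) + E m + (if m = 0 then 0 else E (m - 1)))
        \<le> 3 * G * (real k + 1) * lower_order_energy L lam (Suc k) f"
      using mult_left_mono[OF sum_neighbours_le[OF E0, where k = k] G0]
      by (simp add: lower_order_energy_def E_def mult_ac)
    ultimately show "lam * carleman_energy L x0 lam (Suc k) f - 3 * G * (real k + 1)
        * lower_order_energy L lam (Suc k) f
        \<le> lam * l2_norm_sq L ((conj_deriv_adj lam x0 ^^ Suc k) f)"
      by linarith
  qed (use G0 in simp)
qed

lemma lower_order_energy_le_carleman_energy: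
  fixes \<delta> lam :: real
  assumes \<delta>: "0 < \<delta>" "\<delta> \<le> 1" "\<And>x. x \<in> {0..L} \<Longrightarrow> \<delta> \<le> \<bar>2 * (x - x0)\<bar>"
    and g: "real_smooth g" and lam: "0 \<le> lam"
  shows "\<delta>^(2*k) * lower_order_energy L lam k g \<le> carleman_energy L x0 lam k g"
  unfolding lower_order_energy_def carleman_energy_def sum_distrib_left
proof (rule sum_mono)
  fix m assume "m \<in> {..k}"
  have "\<delta>^(2*k) * deriv_energy L m g \<le> weighted_deriv_energy L x0 (k - m) m g"
    unfolding deriv_energy_def weighted_deriv_energy_def
  proof (subst integral_mult_right[symmetric], rule integral_le)
    fix x assume x: "x \<in> {0..L}"
    have "\<delta>^(2*k) \<le> \<delta>^(2*(k-m))"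
      using \<delta> by (intro power_decreasing) auto
    also have "\<dots> \<le> \<bar>2 * (x - x0)\<bar>^(2*(k-m))"
      using \<delta>(1) \<delta>(3)[OF x] by (intro power_mono) auto
    finally show "\<delta>^(2*k) * ((deriv ^^ m) g x)^2 \<le> (2 * (x - x0))^(2*(k-m)) * ((deriv ^^ m) g x)^2"
      by (intro mult_right_mono) (simp_all add: power_even_abs)
  qed (auto intro!: integrable_continuous_interval continuous_intros g)
  moreover have "1 \<le> real (k choose m)" and "0 \<le> weighted_deriv_energy L x0 (k - m) m g"
    using \<open>m \<in> {..k}\<close> unfolding weighted_deriv_energy_def
    by (auto simp: Suc_le_eq intro!: integral_nonneg integrable_continuous_interval continuous_intros g)
  ultimately show "\<delta>^(2*k) * lower_order_term L lam k g m \<le> real (k choose m)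
      * carleman_term L x0 lam k g m"
    unfolding lower_order_term_def carleman_term_def using lam
    by (simp add: mult.left_commute[of _ "lam^_"] mult_left_mono order.trans[OF _ mult_right_mono[of 1]])
qed

lemma deriv_energy_le_lower_order_energy:
  assumes "1 \<le> k" "1 \<le> lam" and g: "real_smooth g"
  shows "lam * deriv_energy L 0 g \<le> lower_order_energy L lam k g"
proof -
  have "lam * deriv_energy L 0 g \<le> lam^(2*k) * deriv_energy L 0 g"
    using assms deriv_energy_nonneg[OF g, of L 0]
    by (intro mult_right_mono) (auto intro: order.trans[OF _ power_increasing[of 1 "2*k" lam]])
  also have "\<dots> = lower_order_term L lam k g 0"
    by (simp add: lower_order_term_def)
  also have "\<dots> \<le> lower_order_energy L lam k g"
    unfolding lower_order_energy_def
    by (rule member_le_sum) (use assms deriv_energy_nonneg[OF g] in \<open>auto simp: lower_order_term_def\<close>)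
  finally show ?thesis .
qed

lemma carleman_energy_le_conj_deriv_pow_difference:
  fixes K A \<delta> lam :: real
  assumes L: "0 < L" "0 < c" "d < L" and g: "supported_smooth c d g" and k: "1 \<le> k" and lam: "1 \<le> lam"
    and K: "lam * carleman_energy L x0 lam k g - K * lower_order_energy L lam k g
      \<le> lam * l2_norm_sq L ((conj_deriv_adj lam x0 ^^ k) g)"
    and \<delta>: "0 < \<delta>" "\<delta> \<le> 1" "\<And>x. x \<in> {0..L} \<Longrightarrow> \<delta> \<le> \<bar>2 * (x - x0)\<bar>"
    and A: "0 \<le> A" and large: "4 * (Suc k)^2 * K + A \<le> 2 * (Suc k)^2 * \<delta>^(2*k) * lam"
  shows "2 * (Suc k)^2 * lam * carleman_energy L x0 lam k g
    \<le> l2_norm_sq L ((conj_deriv lam x0 ^^ Suc k) g) - l2_norm_sq L ((conj_deriv_adj lam x0 ^^ Suc k) g)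
      - A * lam * l2_norm_sq L g"
proof -
  define CE where "CE = carleman_energy L x0 lam k g"
  define LOE where "LOE = lower_order_energy L lam k g"
  have Cg: "real_smooth g" using g by (simp add: supported_smooth_def)
  have "(real (Suc k))^2 * (4 * lam) * l2_norm_sq L ((conj_deriv_adj lam x0 ^^ k) g)
      \<le> l2_norm_sq L ((conj_deriv lam x0 ^^ Suc k) g)
          - l2_norm_sq L ((conj_deriv_adj lam x0 ^^ Suc k) g)"
    using l2_norm_sq_conj_deriv_pow_ge[OF _ L(2,3) g, where lam = lam and ?x0.0 = x0 and m = k] L
        lam by simp
  moreover have "4 * (Suc k)^2 * (lam * CE - K * LOE)
      \<le> (real (Suc k))^2 * (4 * lam) * l2_norm_sq L ((conj_deriv_adj lam x0 ^^ k) g)"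
    using mult_left_mono[OF K, of "4 * (Suc k)^2"] unfolding CE_def LOE_def by (simp add: mult_ac)
  moreover have "lam * l2_norm_sq L g \<le> LOE"
    using deriv_energy_le_lower_order_energy[OF k lam Cg, of L]
    by (simp add: LOE_def deriv_energy_def l2_norm_sq_def l2_inner_def power2_eq_square)
  moreover have "(4 * (Suc k)^2 * K + A) * LOE \<le> 2 * (Suc k)^2 * lam * CE"
  proof -
    have "0 \<le> LOE"
      unfolding LOE_def lower_order_energy_def lower_order_term_def
      using lam deriv_energy_nonneg[OF Cg] by (auto intro!: sum_nonneg)
    then have "(4 * (Suc k)^2 * K + A) * LOE \<le> 2 * (Suc k)^2 * lam * (\<delta>^(2*k) * LOE)"
      using mult_right_mono[OF large] by (simp add: mult_ac)
    also have "\<dots> \<le> 2 * (Suc k)^2 * lam * CE"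
      using lower_order_energy_le_carleman_energy[OF \<delta> Cg, where lam = lam and k = k] lam
      by (intro mult_left_mono) (auto simp: CE_def LOE_def)
    finally show ?thesis .
  qed
  ultimately show ?thesis
    using mult_left_mono[OF \<open>lam * l2_norm_sq L g \<le> LOE\<close> A]
    unfolding CE_def[symmetric] by (simp add: algebra_simps)
qed


section \<open>Smooth functions of two variables\<close>

definition differentiable2 :: "(real \<Rightarrow> real \<Rightarrow> real) \<Rightarrow> bool" where
  "differentiable2 f \<longleftrightarrow> (\<forall>z. (\<lambda>p. f (fst p) (snd p)) differentiable (at z))"

lemma apply_partials_Cons: "apply_partials (b # ds) f = apply_partials ds (if b then pt f else px f)"
  by (simp add: apply_partials_def)

lemma apply_partials_Nil: "apply_partials [] f = f"
  by (simp add: apply_partials_def)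

lemma smooth2_differentiable2_apply_partials: "smooth2 f \<Longrightarrow> differentiable2 (apply_partials ds f)"
  by (simp add: smooth2_def differentiable2_def)

lemma smooth2_differentiable2: "smooth2 f \<Longrightarrow> differentiable2 f"
  using smooth2_differentiable2_apply_partials[of f "[]"] by (simp add: apply_partials_Nil)

lemma smooth2_pt: assumes "smooth2 f" shows "smooth2 (pt f)"
  unfolding smooth2_def
proof (intro allI)
  fix ds z
  have e: "apply_partials ds (pt f) = apply_partials (True # ds) f" by (simp add: apply_partials_Cons)
  show "(\<lambda>p. apply_partials ds (pt f) (fst p) (snd p)) differentiable at z"
    unfolding e using assms unfolding smooth2_def by blast
qed

lemma smooth2_px: assumes "smooth2 f" shows "smooth2 (px f)"
  unfolding smooth2_def
proof (intro allI)
  fix ds z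
  have e: "apply_partials ds (px f) = apply_partials (False # ds) f" by (simp add: apply_partials_Cons)
  show "(\<lambda>p. apply_partials ds (px f) (fst p) (snd p)) differentiable at z"
    unfolding e using assms unfolding smooth2_def by blast
qed

lemma smooth2_px_pow: "smooth2 f \<Longrightarrow> smooth2 ((px ^^ k) f)"
  by (induction k) (auto intro: smooth2_px)

lemma smooth2_coinduct:
  assumes "f \<in> K" and step: "\<And>g. g \<in> K \<Longrightarrow> differentiable2 g \<and> pt g \<in> K \<and> px g \<in> K"
  shows "smooth2 f"
proof -
  have "apply_partials ds g \<in> K" if "g \<in> K" for ds g
    using that by (induction ds arbitrary: g)
        (auto simp: apply_partials_Nil apply_partials_Cons dest: step)
  note closed = this
  show ?thesis unfolding smooth2_def
  proof (intro allI)
    fix ds z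
    have "apply_partials ds f \<in> K" by (rule closed[OF assms(1)])
    then have "differentiable2 (apply_partials ds f)" using step by blast
    then show "(\<lambda>p. apply_partials ds f (fst p) (snd p)) differentiable at z"
        unfolding differentiable2_def by blast
  qed
qed

lemma differentiable2_has_pt:
  assumes "differentiable2 f"
  shows "((\<lambda>s. f s x) has_field_derivative pt f t x) (at t)"
proof -
  have d: "(\<lambda>s. (s, x)) differentiable (at t)"
    unfolding differentiable_def by (rule exI) (auto intro!: derivative_eq_intros)
  have "(\<lambda>s. (\<lambda>p. f (fst p) (snd p)) (s, x)) differentiable (at t)"
    by (rule differentiable_compose[OF _ d]) (use assms in \<open>auto simp: differentiable2_def\<close>)
  then have "(\<lambda>s. f s x) differentiable (at t)" by simp
  then obtain D where D: "((\<lambda>s. f s x) has_real_derivative D) (at t)"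
      by (auto simp: real_differentiable_def)
  then have "pt f t x = D" unfolding pt_def by (simp add: DERIV_imp_deriv)
  with D show ?thesis by simp
qed

lemma differentiable2_has_px:
  assumes "differentiable2 f"
  shows "((\<lambda>y. f t y) has_field_derivative px f t x) (at x)"
proof -
  have d: "(\<lambda>y. (t, y)) differentiable (at x)"
    unfolding differentiable_def by (rule exI) (auto intro!: derivative_eq_intros)
  have "(\<lambda>y. (\<lambda>p. f (fst p) (snd p)) (t, y)) differentiable (at x)"
    by (rule differentiable_compose[OF _ d]) (use assms in \<open>auto simp: differentiable2_def\<close>)
  then have "(\<lambda>y. f t y) differentiable (at x)" by simp
  then obtain D where D: "((\<lambda>y. f t y) has_real_derivative D) (at x)"
      by (auto simp: real_differentiable_def)
  then have "px f t x = D" unfolding px_def by (simp add: DERIV_imp_deriv)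
  with D show ?thesis by simp
qed

lemma differentiable2_px_field_differentiable: "differentiable2 f
    \<Longrightarrow> (\<lambda>y. f t y) field_differentiable (at x)"
  using differentiable2_has_px field_differentiable_def by blast

lemma differentiable2_continuous_on: "differentiable2 f \<Longrightarrow> continuous_on S (\<lambda>p. f (fst p) (snd p))"
  unfolding differentiable2_def
  by (meson continuous_at_imp_continuous_on differentiable_imp_continuous_within)

lemma differentiable2_continuous_on_case: "differentiable2 f \<Longrightarrow> continuous_on S (\<lambda>(t, x). f t x)"
  using differentiable2_continuous_on[of f S] by (simp add: case_prod_beta')

lemma differentiable2_continuous_on_x: assumes "differentiable2 f" shows "continuous_on S (\<lambda>y. f t y)"
proof (rule continuous_at_imp_continuous_on, intro ballI)
  fix y assume "y \<in> S"
  show "isCont (\<lambda>y. f t y) y"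
    using field_differentiable_imp_continuous_at[OF
        differentiable2_px_field_differentiable[OF assms, of t y]] by simp
qed

lemma apply_partials_pt_px: "apply_partials [False, True] f = pt (px f)"
  by (simp add: apply_partials_Cons apply_partials_Nil)

lemma pt_diff_eq_integral_pt_px:
  assumes f: "smooth2 f" and "a \<le> y"
  shows "pt f s y - pt f s a = integral {a..y} (\<lambda>z. pt (px f) s z)"
proof -
  have Df: "differentiable2 f" and Dpx: "differentiable2 (px f)" and Dptpx: "differentiable2 (pt (px f))"
    using smooth2_differentiable2_apply_partials[OF f, of "[False, True]"]
    by (simp_all add: smooth2_differentiable2 smooth2_px f apply_partials_pt_px)
  have ftc: "f s' y - f s' a = integral {a..y} (\<lambda>z. px f s' z)" for s'
  proof -
    have "((\<lambda>z. px f s' z) has_integral (f s' y - f s' a)) {a..y}"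
    proof (rule fundamental_theorem_of_calculus[OF \<open>a \<le> y\<close>])
      fix z assume "z \<in> {a..y}"
      show "((\<lambda>y. f s' y) has_vector_derivative px f s' z) (at z within {a..y})"
        using differentiable2_has_px[OF Df, of s' z]
        by (simp add: has_real_derivative_iff_has_vector_derivative[symmetric] has_field_derivative_at_within)
    qed
    then show ?thesis by (simp add: integral_unique)
  qed
  have "((\<lambda>s. integral (cbox a y) (\<lambda>z. px f s z)) has_field_derivative
      integral (cbox a y) (\<lambda>z. pt (px f) s z)) (at s within UNIV)"
  proof (rule leibniz_rule_field_derivative[of UNIV a y "\<lambda>s z. px f s z" "\<lambda>s z. pt (px f) s z" s])
    show "\<And>x t. x \<in> UNIV \<Longrightarrow> t \<in> cbox a y
        \<Longrightarrow> ((\<lambda>x. px f x t) has_field_derivative pt (px f) x t) (at x within UNIV)"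
      using differentiable2_has_pt[OF Dpx] by simp
    show "\<And>x. x \<in> UNIV \<Longrightarrow> (\<lambda>z. px f x z) integrable_on cbox a y"
      by (rule integrable_continuous) (rule differentiable2_continuous_on_x[OF Dpx])
    show "continuous_on (UNIV \<times> cbox a y) (\<lambda>(x, t). pt (px f) x t)"
      by (rule differentiable2_continuous_on_case[OF Dptpx])
  qed auto
  then have "((\<lambda>s. f s y - f s a) has_field_derivative integral {a..y} (\<lambda>z. pt (px f) s z)) (at s)"
    using ftc by (simp add: cbox_interval)
  moreover have "((\<lambda>s. f s y - f s a) has_field_derivative (pt f s y - pt f s a)) (at s)"
    by (intro derivative_intros differentiable2_has_pt[OF Df])
  ultimately show ?thesis by (metis DERIV_unique)
qed

text \<open>For fixed \<open>t\<close>, \<open>y \<mapsto> \<partial>\<^sub>t f(t, y)\<close> is an indefinite integral of \<open>\<partial>\<^sub>t\<partial>\<^sub>x f(t, \<cdot>)\<close>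
  by differentiation under the integral sign.\<close>

lemma pt_px_commute:
  assumes f: "smooth2 f"
  shows "pt (px f) = px (pt f)"
proof (intro ext)
  fix t x :: real
  define a where "a = x - 1"
  have Dptpx: "differentiable2 (pt (px f))"
    using smooth2_differentiable2_apply_partials[OF f, of "[False, True]"] by (simp add: apply_partials_pt_px)
  have "((\<lambda>y. integral {a..y} (\<lambda>z. pt (px f) t z)) has_field_derivative pt (px f) t x) (at x within {a..x+1})"
    by (rule integral_has_real_derivative[OF differentiable2_continuous_on_x[OF Dptpx]]) (simp add: a_def)
  moreover have "at x within {a..x+1} = at x"
    by (rule at_within_interior) (simp add: a_def)
  ultimately have "((\<lambda>y. pt f t a + integral {a..y} (\<lambda>z. pt (px f) t z)) has_field_derivative pt (px f) t x) (at x)"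
    by (auto intro!: derivative_eq_intros)
  then have "((\<lambda>y. pt f t y) has_field_derivative pt (px f) t x) (at x)"
  proof (rule has_field_derivative_transform_within_open[of _ _ _ "{a<..}"])
    show "pt f t a + integral {a..y} (\<lambda>z. pt (px f) t z) = pt f t y" if "y \<in> {a<..}" for y
      using pt_diff_eq_integral_pt_px[OF f, of a y t] that by simp
  qed (auto simp: a_def)
  then show "pt (px f) t x = px (pt f) t x"
    unfolding px_def[of "pt f"] by (simp add: DERIV_imp_deriv)
qed

lemma pt_px_pow_commute:
  assumes "smooth2 f"
  shows "pt ((px ^^ n) f) = (px ^^ n) (pt f)"
proof (induction n)
  case 0 then show ?case by simp
next
  case (Suc n)
  have "pt ((px ^^ Suc n) f) = pt (px ((px ^^ n) f))" by simp
  also have "\<dots> = px (pt ((px ^^ n) f))" by (rule pt_px_commute[OF smooth2_px_pow[OF assms]])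
  also have "\<dots> = (px ^^ Suc n) (pt f)" using Suc by simp
  finally show ?case .
qed

inductive_set smooth2_products :: "(real \<Rightarrow> real \<Rightarrow> real) set" where
  smooth2_products_mult: "smooth2 f \<Longrightarrow> smooth2 g \<Longrightarrow> (\<lambda>t x. f t x * g t x) \<in> smooth2_products"
| smooth2_products_add: "h1 \<in> smooth2_products \<Longrightarrow> h2 \<in> smooth2_products
    \<Longrightarrow> (\<lambda>t x. h1 t x + h2 t x) \<in> smooth2_products"

lemma differentiable2_mult: "differentiable2 f \<Longrightarrow> differentiable2 g
    \<Longrightarrow> differentiable2 (\<lambda>t x. f t x * g t x)"
  unfolding differentiable2_def by (auto intro: differentiable_mult)

lemma differentiable2_add: "differentiable2 f \<Longrightarrow> differentiable2 g
    \<Longrightarrow> differentiable2 (\<lambda>t x. f t x + g t x)"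
  unfolding differentiable2_def by (auto intro: differentiable_add)

lemma pt_mult:
  assumes "differentiable2 f" "differentiable2 g"
  shows "pt (\<lambda>t x. f t x * g t x) = (\<lambda>t x. pt f t x * g t x + f t x * pt g t x)"
proof (intro ext)
  fix t x
  have "((\<lambda>s. f s x * g s x) has_field_derivative (pt f t x * g t x + f t x * pt g t x)) (at t)"
    by (auto intro!: derivative_eq_intros differentiable2_has_pt assms)
  then show "pt (\<lambda>t x. f t x * g t x) t x = pt f t x * g t x + f t x * pt g t x"
    unfolding pt_def[of "\<lambda>t x. f t x * g t x"] by (rule DERIV_imp_deriv)
qed

lemma px_mult:
  assumes "differentiable2 f" "differentiable2 g"
  shows "px (\<lambda>t x. f t x * g t x) = (\<lambda>t x. px f t x * g t x + f t x * px g t x)"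
proof (intro ext)
  fix t x
  have "((\<lambda>y. f t y * g t y) has_field_derivative (px f t x * g t x + f t x * px g t x)) (at x)"
    by (auto intro!: derivative_eq_intros differentiable2_has_px assms)
  then show "px (\<lambda>t x. f t x * g t x) t x = px f t x * g t x + f t x * px g t x"
    unfolding px_def[of "\<lambda>t x. f t x * g t x"] by (rule DERIV_imp_deriv)
qed

lemma pt_add:
  assumes "differentiable2 f" "differentiable2 g"
  shows "pt (\<lambda>t x. f t x + g t x) = (\<lambda>t x. pt f t x + pt g t x)"
proof (intro ext)
  fix t x
  have "((\<lambda>s. f s x + g s x) has_field_derivative (pt f t x + pt g t x)) (at t)"
    by (auto intro!: derivative_eq_intros differentiable2_has_pt assms)
  then show "pt (\<lambda>t x. f t x + g t x) t x = pt f t x + pt g t x"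
    unfolding pt_def[of "\<lambda>t x. f t x + g t x"] by (rule DERIV_imp_deriv)
qed

lemma px_add:
  assumes "differentiable2 f" "differentiable2 g"
  shows "px (\<lambda>t x. f t x + g t x) = (\<lambda>t x. px f t x + px g t x)"
proof (intro ext)
  fix t x
  have "((\<lambda>y. f t y + g t y) has_field_derivative (px f t x + px g t x)) (at x)"
    by (auto intro!: derivative_eq_intros differentiable2_has_px assms)
  then show "px (\<lambda>t x. f t x + g t x) t x = px f t x + px g t x"
    unfolding px_def[of "\<lambda>t x. f t x + g t x"] by (rule DERIV_imp_deriv)
qed

lemma smooth2_products_closed: "h \<in> smooth2_products \<Longrightarrow> differentiable2 h \<and> pt h \<in> smooth2_products
    \<and> px h \<in> smooth2_products"
proof (induction rule: smooth2_products.induct)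
  case (smooth2_products_mult f g)
  have D: "differentiable2 f" "differentiable2 g" using smooth2_products_mult
      by (auto intro: smooth2_differentiable2)
  have "pt (\<lambda>t x. f t x * g t x) \<in> smooth2_products"
    unfolding pt_mult[OF D] by (intro smooth2_products.smooth2_products_add
        smooth2_products.smooth2_products_mult smooth2_pt smooth2_products_mult)
  moreover have "px (\<lambda>t x. f t x * g t x) \<in> smooth2_products"
    unfolding px_mult[OF D] by (intro smooth2_products.smooth2_products_add
        smooth2_products.smooth2_products_mult smooth2_px smooth2_products_mult)
  ultimately show ?case using differentiable2_mult[OF D] by blast
next
  case (smooth2_products_add h1 h2)
  have D: "differentiable2 h1" "differentiable2 h2" using smooth2_products_add by auto
  show ?case using differentiable2_add[OF D] smooth2_products_add
    unfolding pt_add[OF D] px_add[OF D] by (auto intro: smooth2_products.smooth2_products_add)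
qed

lemma smooth2_mult: "smooth2 f \<Longrightarrow> smooth2 g \<Longrightarrow> smooth2 (\<lambda>t x. f t x * g t x)"
  by (rule smooth2_coinduct[of _ smooth2_products])
      (auto intro: smooth2_products.smooth2_products_mult dest: smooth2_products_closed)

lemma differentiable_at_snd: "snd differentiable (at (z::real\<times>real))"
  unfolding differentiable_def using has_derivative_snd[OF has_derivative_ident] by blast

lemma differentiable_at_fst: "fst differentiable (at (z::real\<times>real))"
  unfolding differentiable_def using has_derivative_fst[OF has_derivative_ident] by blast

lemma smooth2_fun_of_x:
  assumes a: "real_smooth a"
  shows "smooth2 (\<lambda>t x. a x)"
proof -
  define K where "K = insert (\<lambda>(t::real) (x::real). 0::real) (range (\<lambda>k t x. (deriv ^^ k) a x))"
  have "(\<lambda>t x. a x) \<in> K"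
    unfolding K_def by (rule insertI2, rule image_eqI[where x = 0]) auto
  moreover have "differentiable2 g \<and> pt g \<in> K \<and> px g \<in> K" if "g \<in> K" for g
  proof -
    from that consider "g = (\<lambda>t x. 0)" | k where "g = (\<lambda>t x. (deriv ^^ k) a x)"
      unfolding K_def by auto
    then show ?thesis
    proof cases
      case (2 k)
      have "(\<lambda>p. (deriv ^^ k) a (snd p)) differentiable at z" for z :: "real \<times> real"
        using field_differentiable_imp_differentiable[OF real_smooth_differentiable[OF a]]
        by (rule differentiable_compose[OF _ differentiable_at_snd])
      moreover have "(\<lambda>t x. (deriv ^^ Suc k) a x) \<in> K" unfolding K_def by blast
      ultimately show ?thesis by (simp add: 2 K_def differentiable2_def pt_def px_def)
    qed (simp add: K_def differentiable2_def pt_def px_def)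
  qed
  ultimately show ?thesis by (rule smooth2_coinduct)
qed

lemma smooth2_fun_of_t:
  assumes a: "real_smooth a"
  shows "smooth2 (\<lambda>t x. a t)"
proof -
  define K where "K = insert (\<lambda>(t::real) (x::real). 0::real) (range (\<lambda>k t x. (deriv ^^ k) a t))"
  have "(\<lambda>t x. a t) \<in> K"
    unfolding K_def by (rule insertI2, rule image_eqI[where x = 0]) auto
  moreover have "differentiable2 g \<and> pt g \<in> K \<and> px g \<in> K" if "g \<in> K" for g
  proof -
    from that consider "g = (\<lambda>t x. 0)" | k where "g = (\<lambda>t x. (deriv ^^ k) a t)"
      unfolding K_def by auto
    then show ?thesis
    proof cases
      case (2 k)
      have "(\<lambda>p. (deriv ^^ k) a (fst p)) differentiable at z" for z :: "real \<times> real"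
        using field_differentiable_imp_differentiable[OF real_smooth_differentiable[OF a]]
        by (rule differentiable_compose[OF _ differentiable_at_fst])
      moreover have "(\<lambda>t x. (deriv ^^ Suc k) a t) \<in> K" unfolding K_def by blast
      ultimately show ?thesis by (simp add: 2 K_def differentiable2_def pt_def px_def)
    qed (simp add: K_def differentiable2_def pt_def px_def)
  qed
  ultimately show ?thesis by (rule smooth2_coinduct)
qed

lemma px_pow_eq_higher_deriv: "(px ^^ m) f t x = (deriv ^^ m) (\<lambda>y. f t y) x"
proof (induction m arbitrary: x)
  case 0 then show ?case by simp
next
  case (Suc m)
  have e: "(\<lambda>y. (px ^^ m) f t y) = (deriv ^^ m) (\<lambda>y. f t y)" using Suc by (simp add: fun_eq_iff)
  have "(px ^^ Suc m) f t x = deriv (\<lambda>y. (px ^^ m) f t y) x"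
    by (simp only: funpow.simps o_apply px_def[of "(px ^^ m) f"])
  also have "\<dots> = (deriv ^^ Suc m) (\<lambda>y. f t y) x" by (simp only: e funpow.simps o_apply)
  finally show ?case .
qed

lemma smooth2_slice_real_smooth: assumes "smooth2 f" shows "real_smooth (\<lambda>y. f t y)"
  unfolding real_smooth_def
proof (intro allI)
  fix k x
  have e: "(deriv ^^ k) (\<lambda>y. f t y) = (\<lambda>y. (px ^^ k) f t y)"
      by (simp add: fun_eq_iff px_pow_eq_higher_deriv)
  show "(deriv ^^ k) (\<lambda>y. f t y) field_differentiable at x"
    unfolding e by (rule differentiable2_px_field_differentiable[OF
        smooth2_differentiable2[OF smooth2_px_pow[OF assms]]])
qed


section \<open>Conjugation on time slices\<close>

text \<open>The time derivative of this flux collects the \<open>\<alpha>\<close>-cross terms of the conjugated square;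
  it vanishes at \<open>t = 0\<close> and \<open>t = T\<close> because \<open>v\<close> does.\<close>

definition carleman_flux ::
    "real \<Rightarrow> real \<Rightarrow> real \<Rightarrow> real \<Rightarrow> real \<Rightarrow> nat \<Rightarrow> (real \<Rightarrow> real \<Rightarrow> real) \<Rightarrow> real \<Rightarrow> real \<Rightarrow> real" where
  "carleman_flux \<alpha> \<beta> t0 x0 lam n v t x = 2 * \<alpha> * (exp (2 * lam * ((x - x0)^2 - \<beta> * (t - t0)^2))
     * (2 * \<alpha> * \<beta> * lam * (t - t0) * (v t x)^2 + v t x * (px ^^ n) v t x))"

lemma has_field_derivative_carleman_flux:
  assumes "smooth2 v"
  shows "((\<lambda>s. carleman_flux \<alpha> \<beta> t0 x0 lam n v s x) has_field_derivative
    2*\<alpha>*(exp (2 * lam * ((x - x0)^2 - \<beta>*(t - t0)^2)) * (2*lam*(-2*\<beta>*(t-t0)))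
        * (2*\<alpha>*\<beta>*lam*(t-t0)*(v t x)^2 + v t x * (px ^^ n) v t x)
      + exp (2 * lam * ((x - x0)^2 - \<beta>*(t - t0)^2)) * (2*\<alpha>*\<beta>*lam*(v t x)^2
        + 2*\<alpha>*\<beta>*lam*(t-t0)*(2 * v t x * pt v t x) + pt v t x * (px ^^ n) v t x
        + v t x * (px ^^ n) (pt v) t x))) (at t)"
proof -
  have "((\<lambda>s. (px ^^ n) v s x) has_field_derivative (px ^^ n) (pt v) t x) (at t)"
    using differentiable2_has_pt[OF smooth2_differentiable2[OF smooth2_px_pow[OF assms]],
        where x = x and t = t]
    by (simp add: pt_px_pow_commute[OF assms])
  then show ?thesis
    unfolding carleman_flux_def
    by (auto intro!: derivative_eq_intros differentiable2_has_pt[OF smooth2_differentiable2[OF assms]]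
        simp: power2_eq_square algebra_simps)
qed

lemma pt_carleman_flux:
  assumes "smooth2 v"
  shows "pt (carleman_flux \<alpha> \<beta> t0 x0 lam n v) t x =
    2*\<alpha>*(exp (2 * lam * ((x - x0)^2 - \<beta>*(t - t0)^2)) * (2*lam*(-2*\<beta>*(t-t0)))
        * (2*\<alpha>*\<beta>*lam*(t-t0)*(v t x)^2 + v t x * (px ^^ n) v t x)
      + exp (2 * lam * ((x - x0)^2 - \<beta>*(t - t0)^2)) * (2*\<alpha>*\<beta>*lam*(v t x)^2
        + 2*\<alpha>*\<beta>*lam*(t-t0)*(2 * v t x * pt v t x) + pt v t x * (px ^^ n) v t x
        + v t x * (px ^^ n) (pt v) t x))"
  unfolding pt_def[of "carleman_flux \<alpha> \<beta> t0 x0 lam n v"]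
  by (rule DERIV_imp_deriv[OF has_field_derivative_carleman_flux[OF assms]])

lemma has_pt_carleman_flux:
  "smooth2 v \<Longrightarrow> ((\<lambda>s. carleman_flux \<alpha> \<beta> t0 x0 lam n v s x) has_field_derivative
    pt (carleman_flux \<alpha> \<beta> t0 x0 lam n v) t x) (at t)"
  unfolding pt_carleman_flux by (rule has_field_derivative_carleman_flux)

lemma continuous_on_pt_carleman_flux:
  assumes "smooth2 v"
  shows "continuous_on S (\<lambda>(t, x). pt (carleman_flux \<alpha> \<beta> t0 x0 lam n v) t x)"
proof -
  have "differentiable2 v" "differentiable2 (pt v)"
    "differentiable2 ((px ^^ n) v)" "differentiable2 ((px ^^ n) (pt v))"
    by (intro smooth2_differentiable2 smooth2_px_pow smooth2_pt assms)+
  then show ?thesis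
    unfolding pt_carleman_flux[OF assms] case_prod_beta'
    by (intro continuous_intros differentiable2_continuous_on)
qed

lemma smooth2_exp_weight_mult:
  assumes "smooth2 v"
  shows "smooth2 (\<lambda>t x. exp (lam * ((x - x0)^2 - \<beta> * (t - t0)^2)) * v t x)"
proof -
  have "(\<lambda>t x. exp (lam * ((x - x0)^2 - \<beta> * (t - t0)^2)) * v t x)
      = (\<lambda>t x. (exp (lam * (x - x0)^2) * exp ((- lam * \<beta>) * (t - t0)^2)) * v t x)"
    by (simp add: fun_eq_iff algebra_simps flip: exp_add)
  then show ?thesis
    by (simp only:) (intro smooth2_mult smooth2_fun_of_x smooth2_fun_of_t real_smooth_exp_quadratic
        assms)
qed

lemma conjugated_slice_identity:
  assumes sv: "smooth2 v" and w_def: "w = (\<lambda>t x. exp (lam * ((x - x0)^2 - \<beta> * (t - t0)^2)) * v t x)"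
  shows "exp (2 * lam * ((x - x0)^2 - \<beta> * (t - t0)^2)) * (\<alpha> * pt v t x + (px ^^ n) v t x)^2
      - pt (carleman_flux \<alpha> \<beta> t0 x0 lam n v) t x
    = (\<alpha> * pt w t x + 2*\<alpha>*\<beta>*lam*(t - t0) * w t x + (conj_deriv lam x0 ^^ n) (\<lambda>y. w t y) x)^2
      - 2 * \<alpha> * (2*\<alpha>*\<beta>*lam * (w t x)^2 + 2 * (2*\<alpha>*\<beta>*lam*(t - t0)) * (w t x * pt w t x)
        + pt w t x * (conj_deriv lam x0 ^^ n) (\<lambda>y. w t y) x
        + w t x * (conj_deriv lam x0 ^^ n) (\<lambda>y. pt w t y) x)"
proof -
  define kk where "kk = \<beta> * (t - t0)^2"
  define e where "e y = exp (lam * ((y - x0)^2 - kk))" for y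
  define \<tau> where "\<tau> = -2 * \<beta> * (t - t0)"
  define u where "u y = v t y" for y
  define u1 where "u1 y = pt v t y" for y
  have Dv: "differentiable2 v" by (rule smooth2_differentiable2[OF sv])
  have Cu: "real_smooth u" and Cu1: "real_smooth u1"
    unfolding u_def u1_def by (intro smooth2_slice_real_smooth smooth2_pt sv)+
  have g: "(\<lambda>y. w t y) = (\<lambda>y. e y * u y)"
    by (simp add: w_def e_def u_def kk_def)
  have h: "(\<lambda>y. pt w t y) = (\<lambda>y. e y * (lam * \<tau> * u y + 1 * u1 y))"
  proof
    fix y
    have "((\<lambda>s. w s y) has_field_derivative e y * (lam * \<tau> * u y + 1 * u1 y)) (at t)"
      unfolding w_def e_def u_def u1_def \<tau>_def kk_def
      by (auto intro!: derivative_eq_intros differentiable2_has_pt[OF Dv] simp: algebra_simps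
          power2_eq_square)
    then show "pt w t y = e y * (lam * \<tau> * u y + 1 * u1 y)"
      unfolding pt_def[of w] by (rule DERIV_imp_deriv)
  qed
  have X: "(conj_deriv lam x0 ^^ n) (\<lambda>y. w t y) x = e x * (deriv ^^ n) u x"
    unfolding g e_def by (simp add: conj_deriv_pow_exp_weight[OF Cu])
  have Z: "(conj_deriv lam x0 ^^ n) (\<lambda>y. pt w t y) x = e x
      * (lam * \<tau> * (deriv ^^ n) u x + 1 * (deriv ^^ n) u1 x)"
    unfolding h e_def conj_deriv_pow_exp_weight[OF real_smooth_linear_combination[OF Cu Cu1]]
      higher_deriv_linear_combination[OF Cu Cu1] by simp
  have e2: "exp (2 * lam * ((x - x0)^2 - \<beta> * (t - t0)^2)) = (e x)^2"
    by (simp add: e_def kk_def power2_eq_square flip: exp_add)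
  have W: "w t x = e x * u x" "pt w t x = e x * (lam * \<tau> * u x + 1 * u1 x)"
    using fun_cong[OF g, of x] fun_cong[OF h, of x] by simp_all
  have V: "(px ^^ n) v t x = (deriv ^^ n) u x" "(px ^^ n) (pt v) t x = (deriv ^^ n) u1 x"
    "v t x = u x" "pt v t x = u1 x"
    unfolding u_def u1_def by (rule px_pow_eq_higher_deriv)+ simp_all
  show ?thesis
    unfolding pt_carleman_flux[OF sv] e2 X Z W V by (simp add: \<tau>_def power2_eq_square algebra_simps)
qed

lemma supported_smooth_weighted_slices:
  assumes sv: "smooth2 v" and supp: "\<And>s y. v s y \<noteq> 0 \<Longrightarrow> c \<le> y \<and> y \<le> d"
    and w_def: "w = (\<lambda>t x. exp (lam * ((x - x0)^2 - \<beta> * (t - t0)^2)) * v t x)"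
  shows "supported_smooth c d (\<lambda>x. w t x)" "supported_smooth c d (\<lambda>x. pt w t x)"
proof -
  have sw: "smooth2 w" unfolding w_def by (rule smooth2_exp_weight_mult[OF sv])
  have vanish: "w s y = 0" if "y < c \<or> d < y" for s y
    using supp[of s y] that by (cases "v s y = 0") (auto simp: w_def)
  then have "pt w t y = 0" if "y < c \<or> d < y" for y
    using that by (simp add: pt_def)
  then show "supported_smooth c d (\<lambda>x. w t x)" "supported_smooth c d (\<lambda>x. pt w t x)"
    using vanish smooth2_slice_real_smooth[OF sw] smooth2_slice_real_smooth[OF smooth2_pt[OF sw]]
    by (auto simp: supported_smooth_def vanishes_outside_def)
qed

lemma slice_conj_deriv_estimate:
  fixes v :: "real \<Rightarrow> real \<Rightarrow> real" and lam x0 \<beta> t0 :: real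
  assumes L: "0 < L" "0 < c" "d < L" and sv: "smooth2 v" and supp: "\<And>s y. v s y \<noteq> 0 \<Longrightarrow> c \<le> y \<and> y \<le> d"
    and w_def: "w = (\<lambda>t x. exp (lam * ((x - x0)^2 - \<beta> * (t - t0)^2)) * v t x)"
  shows "l2_norm_sq L ((conj_deriv lam x0 ^^ n) (\<lambda>x. w t x))
      - l2_norm_sq L ((conj_deriv_adj lam x0 ^^ n) (\<lambda>x. w t x))
      - 4 * \<alpha>^2 * \<beta> * lam * l2_norm_sq L (\<lambda>x. w t x)
    \<le> integral {0..L} (\<lambda>x. exp (2 * lam * ((x - x0)^2 - \<beta> * (t - t0)^2))
        * (\<alpha> * pt v t x + (px ^^ n) v t x)^2
        - pt (carleman_flux \<alpha> \<beta> t0 x0 lam n v) t x)"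
proof -
  define g where "g = (\<lambda>x. w t x)"
  define h where "h = (\<lambda>x. pt w t x)"
  define V where "V = 2 * \<alpha> * \<beta> * lam * (t - t0)"
  define X where "X = (conj_deriv lam x0 ^^ n) g"
  define Z where "Z = (conj_deriv lam x0 ^^ n) h"
  have g: "supported_smooth c d g" and h: "supported_smooth c d h"
    using supported_smooth_weighted_slices[OF sv, of c d w lam x0 \<beta> t0 t] supp w_def
    unfolding g_def h_def by blast+
  have cont: "continuous_on {0..L} g" "continuous_on {0..L} h" "continuous_on {0..L} X"
      "continuous_on {0..L} Z"
    using g h by (auto simp: supported_smooth_def X_def Z_def intro!: real_smooth_continuous_on
        real_smooth_conj_deriv_pow)
  have HA: "((\<lambda>x. (\<alpha> * h x + V * g x + X x)^2) has_integral
      integral {0..L} (\<lambda>x. (\<alpha> * h x + V * g x + X x)^2)) {0..L}"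
    by (rule continuous_on_has_integral) (intro continuous_intros cont)
  have HG: "((\<lambda>x. 2 * \<alpha> * (2*\<alpha>*\<beta>*lam * (g x * g x) + 2 * V * (g x * h x) + h x * X x + g x * Z x))
      has_integral 2 * \<alpha> * (2*\<alpha>*\<beta>*lam * l2_norm_sq L g + 2 * V * l2_inner L g h + l2_inner L h X
          + l2_inner L g Z))
      {0..L}"
    unfolding l2_norm_sq_def by (intro has_integral_add has_integral_mult_right
        has_integral_l2_inner cont)
  have "integral {0..L} (\<lambda>x. exp (2 * lam * ((x - x0)^2 - \<beta> * (t - t0)^2))
      * (\<alpha> * pt v t x + (px ^^ n) v t x)^2
        - pt (carleman_flux \<alpha> \<beta> t0 x0 lam n v) t x)
    = integral {0..L} (\<lambda>x. (\<alpha> * h x + V * g x + X x)^2)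
      - 2 * \<alpha> * (2*\<alpha>*\<beta>*lam * l2_norm_sq L g + 2 * V * l2_inner L g h + l2_inner L h X + l2_inner L g Z)"
  proof -
    have "exp (2 * lam * ((x - x0)^2 - \<beta> * (t - t0)^2)) * (\<alpha> * pt v t x + (px ^^ n) v t x)^2
        - pt (carleman_flux \<alpha> \<beta> t0 x0 lam n v) t x
      = (\<alpha> * h x + V * g x + X x)^2
        - 2 * \<alpha> * (2*\<alpha>*\<beta>*lam * (g x * g x) + 2 * V * (g x * h x) + h x * X x + g x * Z x)" for x
      using conjugated_slice_identity[OF sv w_def, where \<alpha> = \<alpha> and n = n and t = t and x = x]
      by (simp add: g_def h_def V_def X_def Z_def power2_eq_square)
    then show ?thesis
      by (simp only:) (rule integral_unique[OF has_integral_diff[OF HA HG]])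
  qed
  moreover have "l2_norm_sq L X - l2_norm_sq L ((conj_deriv_adj lam x0 ^^ n) g)
      + 2 * \<alpha> * (l2_inner L h X + l2_inner L g Z + 2 * V * l2_inner L g h)
    \<le> integral {0..L} (\<lambda>x. (\<alpha> * h x + V * g x + X x)^2)"
    unfolding X_def Z_def by (rule integral_square_conj_deriv_pow_ge[OF _ L(2,3) g h]) (use L in simp)
  ultimately show ?thesis
    by (simp add: g_def[symmetric] X_def V_def power2_eq_square algebra_simps)
qed


section \<open>The Carleman estimate\<close>

lemma rectangle_eq_cbox: "{0..T} \<times> {0..L} = cbox (0::real, 0::real) (T, L)"
  unfolding cbox_Pair_eq by (simp add: cbox_interval)

lemma integral_rectangle_t_x:
  fixes f :: "real \<times> real \<Rightarrow> real"
  assumes "continuous_on ({0..T} \<times> {0..L}) f"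
  shows "integral ({0..T} \<times> {0..L}) f = integral {0..T} (\<lambda>t. integral {0..L} (\<lambda>x. f (t, x)))"
  using integral_prod_continuous[of 0 0 T L f] assms by (simp add: rectangle_eq_cbox cbox_interval)

lemma integral_rectangle_x_t:
  fixes f :: "real \<times> real \<Rightarrow> real"
  assumes "continuous_on ({0..T} \<times> {0..L}) f"
  shows "integral ({0..T} \<times> {0..L}) f = integral {0..L} (\<lambda>x. integral {0..T} (\<lambda>t. f (t, x)))"
proof -
  have e1: "(\<lambda>(x, y). f (x, y)) = f" by (simp add: fun_eq_iff)
  have c1: "continuous_on (cbox (0, 0) (T, L)) (\<lambda>(x, y). (\<lambda>x y. f (x, y)) x y)"
    using assms by (simp add: rectangle_eq_cbox e1)
  have sw: "integral (cbox (0, 0) (T, L)) (\<lambda>(x, y). f (x, y))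
      = integral (cbox (0, 0) (L, T)) (\<lambda>(x, y). f (y, x))"
    using integral_swap_2dim[OF c1] by simp
  have c2: "continuous_on ({0..L} \<times> {0..T}) (\<lambda>(x, y). f (y, x))"
  proof -
    have "(\<lambda>(x, y). f (y, x)) = f \<circ> prod.swap" by (simp add: fun_eq_iff)
    moreover have "continuous_on ({0..L} \<times> {0..T}) (f \<circ> prod.swap)"
    proof (rule continuous_on_compose)
      show "continuous_on ({0..L} \<times> {0..T}) prod.swap" by (intro continuous_intros)
      have "prod.swap ` ({0..L} \<times> {0..T}) = {0..T} \<times> {0..L}" by auto
      then show "continuous_on (prod.swap ` ({0..L} \<times> {0..T})) f" using assms by simp
    qed
    ultimately show ?thesis by simp
  qed
  have "integral ({0..T} \<times> {0..L}) f = integral ({0..L} \<times> {0..T}) (\<lambda>(x, y). f (y, x))"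
    using sw by (simp add: rectangle_eq_cbox e1)
  also have "\<dots> = integral {0..L} (\<lambda>x. integral {0..T} (\<lambda>t. f (t, x)))"
    by (subst integral_rectangle_t_x[OF c2]) simp
  finally show ?thesis .
qed

lemma integrable_rectangle:
  fixes f :: "real \<times> real \<Rightarrow> real"
  assumes "continuous_on ({0..T} \<times> {0..L}) f"
  shows "f integrable_on ({0..T} \<times> {0..L})"
  using assms unfolding rectangle_eq_cbox by (rule integrable_continuous)


lemma integral_nonneg_any:
  fixes f :: "'a::euclidean_space \<Rightarrow> real"
  assumes "\<And>x. x \<in> S \<Longrightarrow> 0 \<le> f x"
  shows "0 \<le> integral S f"
proof (cases "f integrable_on S")
  case True then show ?thesis using assms by (rule integral_nonneg)
next
  case False then show ?thesis by (simp add: not_integrable_integral)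
qed

lemma integral_rectangle_sum_le_of_slices:
  fixes F :: "nat \<Rightarrow> real \<times> real \<Rightarrow> real" and H :: "real \<times> real \<Rightarrow> real"
  assumes F: "\<And>m. m < n \<Longrightarrow> continuous_on UNIV (F m)" and H: "continuous_on UNIV H"
    and slice: "\<And>t. t \<in> {0..T}
        \<Longrightarrow> (\<Sum>m<n. integral {0..L} (\<lambda>x. F m (t, x))) \<le> integral {0..L} (\<lambda>x. H (t, x))"
  shows "(\<Sum>m<n. integral ({0..T} \<times> {0..L}) (F m)) \<le> integral ({0..T} \<times> {0..L}) H"
proof -
  define D where "D p = H p - (\<Sum>m<n. F m p)" for p
  have cD: "continuous_on S D" for S
    unfolding D_def by (intro continuous_intros continuous_on_subset[OF H]
        continuous_on_subset[OF F]) auto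
  have cont_slice: "continuous_on S (\<lambda>x. f (t, x))" if "continuous_on UNIV f"
      for f :: "real \<times> real \<Rightarrow> real" and S t
    by (rule continuous_on_compose2[OF that]) (auto intro!: continuous_intros)
  have "0 \<le> integral {0..T} (\<lambda>t. integral {0..L} (\<lambda>x. D (t, x)))"
  proof (rule integral_nonneg_any)
    fix t assume "t \<in> {0..T}"
    have iF: "((\<lambda>x. F m (t, x)) has_integral integral {0..L} (\<lambda>x. F m (t, x))) {0..L}" if "m < n" for m
      by (rule continuous_on_has_integral[OF cont_slice[OF F[OF that]]])
    have iH: "((\<lambda>x. H (t, x)) has_integral integral {0..L} (\<lambda>x. H (t, x))) {0..L}"
      by (rule continuous_on_has_integral[OF cont_slice[OF H]])
    have "((\<lambda>x. D (t, x)) has_integral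
        integral {0..L} (\<lambda>x. H (t, x)) - (\<Sum>m<n. integral {0..L} (\<lambda>x. F m (t, x)))) {0..L}"
      unfolding D_def by (intro has_integral_diff has_integral_sum iH iF) auto
    then have "integral {0..L} (\<lambda>x. D (t, x))
        = integral {0..L} (\<lambda>x. H (t, x)) - (\<Sum>m<n. integral {0..L} (\<lambda>x. F m (t, x)))"
      by (rule integral_unique)
    then show "0 \<le> integral {0..L} (\<lambda>x. D (t, x))"
      using slice[OF \<open>t \<in> {0..T}\<close>] by simp
  qed
  also have "\<dots> = integral ({0..T} \<times> {0..L}) D"
    by (rule integral_rectangle_t_x[symmetric, OF cD])
  also have "\<dots> = integral ({0..T} \<times> {0..L}) H - (\<Sum>m<n. integral ({0..T} \<times> {0..L}) (F m))"
  proof -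
    have "(f has_integral integral ({0..T} \<times> {0..L}) f) ({0..T} \<times> {0..L})" if "continuous_on UNIV f"
        for f :: "real \<times> real \<Rightarrow> real"
      using integrable_rectangle[OF continuous_on_subset[OF that subset_UNIV]]
      by (simp add: has_integral_integral)
    then have "(D has_integral integral ({0..T} \<times> {0..L}) H - (\<Sum>m<n. integral ({0..T} \<times> {0..L}) (F m)))
        ({0..T} \<times> {0..L})"
      unfolding D_def[abs_def] using F H by (intro has_integral_diff has_integral_sum) auto
    then show ?thesis by (rule integral_unique)
  qed
  finally show ?thesis by simp
qed

text \<open>The weight \<open>n\<^sup>2 C(n-1, m) \<lambda>\<^bsup>2n-2m-1\<^esup> \<psi>\<^sub>x\<^bsup>2n-2m-2\<^esup> \<psi>\<^sub>x\<^sub>x\<close> of the theorem, with \<open>\<psi>\<^sub>x = 2(x - x0)\<close>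
  and \<open>\<psi>\<^sub>x\<^sub>x = 2\<close>.\<close>

definition carleman_weight :: "nat \<Rightarrow> real \<Rightarrow> nat \<Rightarrow> real \<Rightarrow> real \<Rightarrow> real" where
  "carleman_weight n x0 m lam x =
    real (n^2) * real ((n - 1) choose m) * lam ^ (2*n - 2*m - 1) * (2 * (x - x0)) ^ (2*n - 2*m - 2) * 2"

lemma carleman_weight_Suc:
  assumes "m \<le> k"
  shows "carleman_weight (Suc k) x0 m lam x =
    2 * real ((Suc k)^2) * real (k choose m) * lam^(2*(k-m)+1) * (2 * (x - x0))^(2*(k-m))"
proof -
  have "2 * Suc k - 2 * m - 1 = 2*(k-m)+1" "2 * Suc k - 2 * m - 2 = 2*(k-m)"
    using assms by auto
  then show ?thesis by (simp add: carleman_weight_def algebra_simps)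
qed

lemma integral_carleman_weight_slice:
  assumes "m \<le> k" and g: "real_smooth g"
  shows "integral {0..L} (\<lambda>x. carleman_weight (Suc k) x0 m lam x * ((deriv ^^ m) g x)^2)
    = 2 * real ((Suc k)^2) * lam * (real (k choose m) * carleman_term L x0 lam k g m)"
proof -
  have "integral {0..L} (\<lambda>x. carleman_weight (Suc k) x0 m lam x * ((deriv ^^ m) g x)^2)
      = integral {0..L} (\<lambda>x. (2 * real ((Suc k)^2) * real (k choose m) * lam^(2*(k-m)+1))
          * ((2 * (x - x0))^(2*(k-m)) * ((deriv ^^ m) g x)^2))"
    by (simp add: carleman_weight_Suc[OF assms(1)] mult_ac)
  also have "\<dots> = 2 * real ((Suc k)^2) * real (k choose m) * lam^(2*(k-m)+1)
      * weighted_deriv_energy L x0 (k - m) m g"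
    unfolding weighted_deriv_energy_def
    by (rule integral_mult_right)
  finally show ?thesis
    by (simp add: carleman_term_def mult_ac)
qed

lemma slice_carleman_bound:
  fixes K \<delta> lam \<alpha> \<beta> t0 x0 :: real
  assumes L: "0 < L" "0 < c" "d < L" and sv: "smooth2 v" and supp: "\<And>s y. v s y \<noteq> 0 \<Longrightarrow> c \<le> y \<and> y \<le> d"
    and k: "1 \<le> k" and lam: "1 \<le> lam" and \<beta>: "0 \<le> \<beta>"
    and K: "\<And>f. supported_smooth c d f
        \<Longrightarrow> lam * carleman_energy L x0 lam k f - K * lower_order_energy L lam k f
      \<le> lam * l2_norm_sq L ((conj_deriv_adj lam x0 ^^ k) f)"
    and \<delta>: "0 < \<delta>" "\<delta> \<le> 1" "\<And>x. x \<in> {0..L} \<Longrightarrow> \<delta> \<le> \<bar>2 * (x - x0)\<bar>"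
    and large: "4 * (Suc k)^2 * K + 4 * \<alpha>^2 * \<beta> \<le> 2 * (Suc k)^2 * \<delta>^(2*k) * lam"
    and w_def: "w = (\<lambda>t x. exp (lam * ((x - x0)^2 - \<beta> * (t - t0)^2)) * v t x)"
  shows "(\<Sum>m<Suc k. integral {0..L} (\<lambda>x. carleman_weight (Suc k) x0 m lam x * ((px ^^ m) w t x)^2))
    \<le> integral {0..L} (\<lambda>x. exp (2 * lam * ((x - x0)^2 - \<beta> * (t - t0)^2))
        * (\<alpha> * pt v t x + (px ^^ Suc k) v t x)^2
        - pt (carleman_flux \<alpha> \<beta> t0 x0 lam (Suc k) v) t x)"
proof -
  define g where "g = (\<lambda>x. w t x)"
  have g: "supported_smooth c d g"
    using supported_smooth_weighted_slices[OF sv, of c d w lam x0 \<beta> t0 t] supp w_def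
    unfolding g_def by blast
  then have Cg: "real_smooth g" by (simp add: supported_smooth_def)
  have "(\<Sum>m<Suc k. integral {0..L} (\<lambda>x. carleman_weight (Suc k) x0 m lam x * ((px ^^ m) w t x)^2))
      = 2 * real ((Suc k)^2) * lam * carleman_energy L x0 lam k g"
    unfolding carleman_energy_def sum_distrib_left lessThan_Suc_atMost
    by (rule sum.cong) (simp_all add: px_pow_eq_higher_deriv g_def[symmetric]
        integral_carleman_weight_slice[OF _ Cg])
  also have "\<dots> \<le> l2_norm_sq L ((conj_deriv lam x0 ^^ Suc k) g)
      - l2_norm_sq L ((conj_deriv_adj lam x0 ^^ Suc k) g)
      - 4 * \<alpha>^2 * \<beta> * lam * l2_norm_sq L g"
    using carleman_energy_le_conj_deriv_pow_difference[OF L g k lam K[OF g] \<delta>, of "4 * \<alpha>^2 * \<beta>"] \<beta> large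
    by (simp add: mult_ac)
  also have "\<dots> \<le> integral {0..L} (\<lambda>x. exp (2 * lam * ((x - x0)^2 - \<beta> * (t - t0)^2))
        * (\<alpha> * pt v t x + (px ^^ Suc k) v t x)^2 - pt (carleman_flux \<alpha> \<beta> t0 x0 lam (Suc k) v) t x)"
    unfolding g_def by (rule slice_conj_deriv_estimate[OF L sv supp w_def])
  finally show ?thesis .
qed

lemma integral_pt_carleman_flux_eq_0:
  assumes sv: "smooth2 v" and T: "0 \<le> T" and v0: "\<And>x. v 0 x = 0" and vT: "\<And>x. v T x = 0"
  shows "integral ({0..T} \<times> {0..L}) (\<lambda>(t, x). pt (carleman_flux \<alpha> \<beta> t0 x0 lam n v) t x) = 0"
proof -
  have "integral ({0..T} \<times> {0..L}) (\<lambda>(t, x). pt (carleman_flux \<alpha> \<beta> t0 x0 lam n v) t x)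
      = integral {0..L} (\<lambda>x. integral {0..T} (\<lambda>t. pt (carleman_flux \<alpha> \<beta> t0 x0 lam n v) t x))"
    by (subst integral_rectangle_x_t) (simp_all add: continuous_on_pt_carleman_flux[OF sv])
  also have "\<dots> = integral {0..L} (\<lambda>x. 0)"
  proof (rule integral_cong)
    fix x
    have "((\<lambda>t. pt (carleman_flux \<alpha> \<beta> t0 x0 lam n v) t x) has_integral
        carleman_flux \<alpha> \<beta> t0 x0 lam n v T x - carleman_flux \<alpha> \<beta> t0 x0 lam n v 0 x) {0..T}"
      by (rule fundamental_theorem_of_calculus[OF T])
        (auto simp: has_real_derivative_iff_has_vector_derivative[symmetric]
          intro: has_field_derivative_at_within has_pt_carleman_flux[OF sv])
    then show "integral {0..T} (\<lambda>t. pt (carleman_flux \<alpha> \<beta> t0 x0 lam n v) t x) = 0"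
      using v0 vT by (simp add: carleman_flux_def integral_unique)
  qed
  finally show ?thesis by simp
qed

lemma integral_sub_pt_carleman_flux:
  fixes F :: "real \<Rightarrow> real \<Rightarrow> real"
  assumes sv: "smooth2 v" and "0 \<le> T" "\<And>x. v 0 x = 0" "\<And>x. v T x = 0"
    and F: "continuous_on UNIV (\<lambda>(t, x). F t x)"
  shows "integral ({0..T} \<times> {0..L}) (\<lambda>(t, x). F t x - pt (carleman_flux \<alpha> \<beta> t0 x0 lam n v) t x)
    = integral ({0..T} \<times> {0..L}) (\<lambda>(t, x). F t x)"
  using integral_diff[OF integrable_rectangle[OF continuous_on_subset[OF F subset_UNIV]]
      integrable_rectangle[OF continuous_on_pt_carleman_flux[OF sv]]]
    integral_pt_carleman_flux_eq_0[OF assms(1-4)]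
  by (simp add: case_prod_beta')

definition carleman_lhs ::
    "real \<Rightarrow> real \<Rightarrow> real \<Rightarrow> real \<Rightarrow> real \<Rightarrow> nat \<Rightarrow> (nat \<Rightarrow> real \<Rightarrow> real \<Rightarrow> real) \<Rightarrow> real
      \<Rightarrow> (real \<Rightarrow> real \<Rightarrow> real) \<Rightarrow> real" where
  "carleman_lhs T L x0 \<beta> t0 n W lam v = (\<Sum>m<n. integral ({0..T} \<times> {0..L}) (\<lambda>(t, x).
    W m t x * ((px ^^ m) (\<lambda>t x. exp (lam * ((x - x0)^2 - \<beta> * (t - t0)^2)) * v t x) t x)^2))"

definition carleman_rhs ::
    "real \<Rightarrow> real \<Rightarrow> real \<Rightarrow> real \<Rightarrow> real \<Rightarrow> real \<Rightarrow> nat \<Rightarrow> real \<Rightarrow> (real \<Rightarrow> real \<Rightarrow> real) \<Rightarrow> real" where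
  "carleman_rhs T L x0 \<beta> t0 \<alpha> n lam v = integral ({0..T} \<times> {0..L})
    (\<lambda>(t, x). exp (2 * lam * ((x - x0)^2 - \<beta> * (t - t0)^2)) * (\<alpha> * pt v t x + (px ^^ n) v t x)^2)"

lemma carleman_estimate_large_lambda:
  fixes T L \<alpha> x0 t0 \<beta> :: real and n :: nat
  assumes T: "0 < T" and L: "0 < L" and n: "2 \<le> n" and x0: "L < x0" and \<beta>: "0 < \<beta>"
  shows "\<exists>lam0\<ge>1. \<forall>lam\<ge>lam0. \<forall>v. test_fun T L v \<longrightarrow>
    carleman_lhs T L x0 \<beta> t0 n (\<lambda>m t x. carleman_weight n x0 m lam x) lam v \<le> carleman_rhs T L x0 \<beta> t0 \<alpha> n lam v"
proof -
  obtain k where nk: "n = Suc k" and k: "1 \<le> k" using n by (cases n) auto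
  obtain K where K: "\<And>c d f lam. 0 < c \<Longrightarrow> d < L \<Longrightarrow> supported_smooth c d f \<Longrightarrow> 1 \<le> lam \<Longrightarrow>
      lam * carleman_energy L x0 lam k f - K * lower_order_energy L lam k f
        \<le> lam * l2_norm_sq L ((conj_deriv_adj lam x0 ^^ k) f)"
    using carleman_energy_le_conj_deriv_adj_pow[OF L, of x0 k] by blast
  define \<delta> where "\<delta> = min 1 (2 * (x0 - L))"
  have \<delta>: "0 < \<delta>" "\<delta> \<le> 1" "\<And>x. x \<in> {0..L} \<Longrightarrow> \<delta> \<le> \<bar>2 * (x - x0)\<bar>"
    using x0 by (auto simp: \<delta>_def)
  define lam0 where "lam0 = max 1 ((4 * (Suc k)^2 * K + 4 * \<alpha>^2 * \<beta>) / (2 * (Suc k)^2 * \<delta>^(2*k)))"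
  show ?thesis
  proof (intro exI[of _ lam0] conjI allI impI)
    fix lam v assume lam: "lam0 \<le> lam" and v: "test_fun T L v"
    then obtain a b c d where sv: "smooth2 v" and ab: "0 < a" "b < T" and cd: "0 < c" "d < L"
      and supp: "\<And>t x. v t x \<noteq> 0 \<Longrightarrow> a \<le> t \<and> t \<le> b \<and> c \<le> x \<and> x \<le> d"
      unfolding test_fun_def by blast
    define w where "w = (\<lambda>t x. exp (lam * ((x - x0)^2 - \<beta> * (t - t0)^2)) * v t x)"
    have lam1: "1 \<le> lam" using lam by (simp add: lam0_def)
    have large: "4 * (Suc k)^2 * K + 4 * \<alpha>^2 * \<beta> \<le> 2 * (Suc k)^2 * \<delta>^(2*k) * lam"
      using lam \<delta>(1) by (simp add: lam0_def pos_divide_le_eq mult_ac)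
    have sw: "smooth2 w" unfolding w_def by (rule smooth2_exp_weight_mult[OF sv])
    have cR: "continuous_on UNIV (\<lambda>(t, x). exp (2 * lam * ((x - x0)^2 - \<beta> * (t - t0)^2))
        * (\<alpha> * pt v t x + (px ^^ n) v t x)^2)"
    proof -
      have "differentiable2 v" "differentiable2 (pt v)" "differentiable2 ((px ^^ n) v)"
        by (intro smooth2_differentiable2 smooth2_px_pow smooth2_pt sv)+
      then show ?thesis
        unfolding case_prod_beta' by (intro continuous_intros differentiable2_continuous_on)
    qed
    have "(\<Sum>m<n. integral ({0..T} \<times> {0..L})
        (\<lambda>(t, x). carleman_weight n x0 m lam x * ((px ^^ m) w t x)^2))
      \<le> integral ({0..T} \<times> {0..L}) (\<lambda>(t, x). exp (2 * lam * ((x - x0)^2 - \<beta> * (t - t0)^2))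
          * (\<alpha> * pt v t x + (px ^^ n) v t x)^2 - pt (carleman_flux \<alpha> \<beta> t0 x0 lam n v) t x)"
    proof (rule integral_rectangle_sum_le_of_slices)
      fix t
      show "(\<Sum>m<n. integral {0..L}
          (\<lambda>x. case (t, x) of (t, x) \<Rightarrow> carleman_weight n x0 m lam x * ((px ^^ m) w t x)^2))
        \<le> integral {0..L} (\<lambda>x. case (t, x) of (t, x) \<Rightarrow> exp (2 * lam * ((x - x0)^2 - \<beta> * (t - t0)^2))
          * (\<alpha> * pt v t x + (px ^^ n) v t x)^2 - pt (carleman_flux \<alpha> \<beta> t0 x0 lam n v) t x)"
        unfolding nk using slice_carleman_bound[OF L cd sv _ k lam1 _ K[OF cd _ lam1] \<delta> large w_def]
            supp \<beta>
        by (simp add: less_imp_le)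
    next
      show "continuous_on UNIV (\<lambda>(t, x). exp (2 * lam * ((x - x0)^2 - \<beta> * (t - t0)^2))
          * (\<alpha> * pt v t x + (px ^^ n) v t x)^2 - pt (carleman_flux \<alpha> \<beta> t0 x0 lam n v) t x)"
        using continuous_on_diff[OF cR continuous_on_pt_carleman_flux[OF sv]] by (simp add: case_prod_beta')
    next
      fix m
      have "differentiable2 ((px ^^ m) w)" by (intro smooth2_differentiable2 smooth2_px_pow sw)
      then show "continuous_on UNIV (\<lambda>(t, x). carleman_weight n x0 m lam x * ((px ^^ m) w t x)^2)"
        unfolding case_prod_beta' carleman_weight_def
        by (intro continuous_intros differentiable2_continuous_on)
    qed
    also have "\<dots> = integral ({0..T} \<times> {0..L}) (\<lambda>(t, x). exp (2 * lam * ((x - x0)^2 - \<beta> * (t - t0)^2))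
          * (\<alpha> * pt v t x + (px ^^ n) v t x)^2)"
    proof (rule integral_sub_pt_carleman_flux[OF sv _ _ _ cR])
      show "v 0 x = 0" "v T x = 0" for x
        using supp[of 0 x] supp[of T x] ab by force+
    qed (use T in simp)
    finally show "carleman_lhs T L x0 \<beta> t0 n (\<lambda>m t x. carleman_weight n x0 m lam x) lam v
        \<le> carleman_rhs T L x0 \<beta> t0 \<alpha> n lam v"
      unfolding carleman_lhs_def carleman_rhs_def w_def .
  qed (simp add: lam0_def)
qed

lemma carleman_weight_bound:
  assumes m: "m < n" and x: "x \<in> {0..L}" and lam: "1 \<le> lam" "lam \<le> lam0"
  shows "\<bar>carleman_weight n x0 m lam x\<bar>
    \<le> 2 * real (n^2) * 2^n * (1 + 2 * (\<bar>x0\<bar> + L))^(2*n) * lam0^2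
        * lam powr (2 * real n - 2 * real m - 3)"
proof -
  define P where "P = 1 + 2 * (\<bar>x0\<bar> + L)"
  have P1: "1 \<le> P" using x by (simp add: P_def)
  have "\<bar>2 * (x - x0)\<bar>^(2*n - 2*m - 2) \<le> P^(2*n - 2*m - 2)"
    using x by (intro power_mono) (auto simp: P_def abs_le_iff)
  also have "\<dots> \<le> P^(2*n)"
    using P1 by (intro power_increasing) auto
  finally have p: "\<bar>2 * (x - x0)\<bar>^(2*n - 2*m - 2) \<le> P^(2*n)" .
  have "real ((n - 1) choose m) \<le> 2^(n - 1)"
    using binomial_le_pow2[of "n - 1" m] by (metis of_nat_le_iff of_nat_numeral of_nat_power)
  also have "\<dots> \<le> 2^n"
    by (rule power_increasing) auto
  finally have b: "real ((n - 1) choose m) \<le> 2^n" .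
  obtain j where nj: "n = Suc (m + j)" using less_imp_Suc_add[OF m] by blast
  have "lam ^ (2*n - 2*m - 1) = lam ^ (2*j + 1)"
    by (simp add: nj)
  also have "\<dots> = lam powr real (2*j + 1)"
    using lam by (intro powr_realpow[symmetric]) simp
  also have "\<dots> = lam powr (2 + (2 * real n - 2 * real m - 3))"
    by (simp add: nj algebra_simps)
  also have "\<dots> = lam powr 2 * lam powr (2 * real n - 2 * real m - 3)"
    by (rule powr_add)
  finally have "lam ^ (2*n - 2*m - 1) = lam powr 2 * lam powr (2 * real n - 2 * real m - 3)" .
  also have "\<dots> \<le> lam0^2 * lam powr (2 * real n - 2 * real m - 3)"
    using lam by (intro mult_right_mono) (auto simp: powr_realpow power_mono)
  finally have l: "lam ^ (2*n - 2*m - 1) \<le> lam0^2 * lam powr (2 * real n - 2 * real m - 3)" .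
  have "\<bar>carleman_weight n x0 m lam x\<bar>
      = 2 * real (n^2) * (real ((n - 1) choose m)
          * (lam ^ (2*n - 2*m - 1) * \<bar>2 * (x - x0)\<bar>^(2*n - 2*m - 2)))"
    using lam by (simp add: carleman_weight_def abs_mult power_abs)
  also have "\<dots> \<le> 2 * real (n^2) * (2^n * (lam0^2 * lam powr (2 * real n - 2 * real m - 3) * P^(2*n)))"
  proof -
    have "lam ^ (2*n - 2*m - 1) * \<bar>2 * (x - x0)\<bar>^(2*n - 2*m - 2)
        \<le> lam0^2 * lam powr (2 * real n - 2 * real m - 3) * P^(2*n)"
      using l p lam by (intro mult_mono) auto
    then have "real ((n - 1) choose m) * (lam ^ (2*n - 2*m - 1) * \<bar>2 * (x - x0)\<bar>^(2*n - 2*m - 2))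
        \<le> 2^n * (lam0^2 * lam powr (2 * real n - 2 * real m - 3) * P^(2*n))"
      using lam by (intro mult_mono[OF b]) auto
    then show ?thesis
      by (rule mult_left_mono) simp
  qed
  finally show ?thesis by (simp add: P_def mult_ac)
qed

theorem theorem1p1:
  fixes T L \<alpha> x\<^sub>0 t\<^sub>0 \<beta> :: real and n :: nat
  assumes "T > 0" and "L > 0" and "\<alpha> \<noteq> 0" and "n \<ge> 2"
    and "x\<^sub>0 > L" and "0 < t\<^sub>0" and "t\<^sub>0 < T" and "\<beta> > 0"
  defines "\<psi> \<equiv> (\<lambda>t x. (x - x\<^sub>0)^2 - \<beta> * (t - t\<^sub>0)^2)"
  shows "\<exists>C > 0. \<exists>R :: nat \<Rightarrow> real \<Rightarrow> real \<Rightarrow> real \<Rightarrow> real.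
    (\<forall>m < n. \<forall>t x lam. t \<in> {0..T} \<and> x \<in> {0..L} \<and> lam \<ge> 1 \<longrightarrow>
        \<bar>R m t x lam\<bar> \<le> C * lam powr (2 * real n - 2 * real m - 3)) \<and>
    (\<forall>m < n. \<forall>lam. continuous_on ({0..T} \<times> {0..L}) (\<lambda>(t, x). R m t x lam)) \<and>
    (\<forall>lam \<ge> 1. \<forall>v. test_fun T L v \<longrightarrow>
       (let w = (\<lambda>t x. exp (lam * \<psi> t x) * v t x) in
        (\<Sum>m<n. integral ({0..T} \<times> {0..L})
           (\<lambda>(t, x). (real (n^2) * real ((n - 1) choose m) * lam ^ (2*n - 2*m - 1)
                        * (2 * (x - x\<^sub>0)) ^ (2*n - 2*m - 2) * 2 + R m t x lam)
                      * ((px ^^ m) w t x)^2))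
        \<le> integral ({0..T} \<times> {0..L})
             (\<lambda>(t, x). exp (2 * lam * \<psi> t x) * (\<alpha> * pt v t x + (px ^^ n) v t x)^2)))"
proof -
  obtain lam0 where lam0: "1 \<le> lam0" and large: "\<And>lam v. lam0 \<le> lam \<Longrightarrow> test_fun T L v \<Longrightarrow>
      carleman_lhs T L x\<^sub>0 \<beta> t\<^sub>0 n (\<lambda>m t x. carleman_weight n x\<^sub>0 m lam x) lam v
        \<le> carleman_rhs T L x\<^sub>0 \<beta> t\<^sub>0 \<alpha> n lam v"
    using carleman_estimate_large_lambda[OF assms(1,2,4,5,8), of t\<^sub>0 \<alpha>] by blast
  txt \<open>For \<open>lam \<ge> lam0\<close> no remainder is needed. Below \<open>lam0\<close> the remainder cancels the weight,
    which costs only a constant factor because \<open>lam\<close> is bounded there.\<close>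
  define R where "R m t x lam = (if lam0 \<le> lam then 0 else - carleman_weight n x\<^sub>0 m lam x)"
    for m :: nat and t x lam :: real
  define C where "C = 2 * real (n^2) * 2^n * (1 + 2 * (\<bar>x\<^sub>0\<bar> + L))^(2*n) * lam0^2 + 1"
  have "0 < C"
    using assms(2) unfolding C_def by (intro add_nonneg_pos) simp_all
  moreover have "\<bar>R m t x lam\<bar> \<le> C * lam powr (2 * real n - 2 * real m - 3)"
    if "m < n" "x \<in> {0..L}" "1 \<le> lam" for m t x lam
    using carleman_weight_bound[OF that, of lam0 x\<^sub>0]
    by (auto simp: R_def C_def distrib_right intro: add_increasing2)
  moreover have "continuous_on ({0..T} \<times> {0..L}) (\<lambda>(t, x). R m t x lam)" for m lam
    by (cases "lam0 \<le> lam") (auto simp: R_def carleman_weight_def case_prod_beta' intro!: continuous_intros)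
  moreover have "carleman_lhs T L x\<^sub>0 \<beta> t\<^sub>0 n (\<lambda>m t x. carleman_weight n x\<^sub>0 m lam x + R m t x lam) lam v
      \<le> carleman_rhs T L x\<^sub>0 \<beta> t\<^sub>0 \<alpha> n lam v" if "test_fun T L v" for lam v
    using large[OF _ that, of lam] by (cases "lam0 \<le> lam")
      (auto simp: R_def carleman_lhs_def carleman_rhs_def case_prod_unfold intro!: integral_nonneg_any)
  ultimately show ?thesis
    unfolding carleman_lhs_def carleman_rhs_def carleman_weight_def Let_def \<psi>_def by blast
qed

end
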